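(* Let $S\subset\mathbb{R}^3$ be a translation surface in Euclidean space, i.e. a surface admitting a parametrization $X(s,t)=\alpha(s)+\beta(t)$, $s\in I$, $t\in J$, where $\alpha:I\subset\mathbb{R}\to\mathbb{R}^3$ and $\beta:J\subset\mathbb{R}\to\mathbb{R}^3$ are smooth curves (the generating curves). (1) If $S$ has constant Gauss curvature $K=0$, then $S$ is a cylindrical surface. (2) If one of the generating curves $\alpha$ or $\beta$ is planar (contained in a plane), then $S$ does not have constant Gauss curvature $K\neq 0$; that is, there is no translation surface with constant nonzero Gauss curvature having a planar generating curve.
   Context: Euclidean space $\mathbb{R}^3$ with its standard metric. A cylindrical surface is a ruled surface whose rulings are all parallel to a fixed direction. *)

theory Defs
  imports "HOL-Analysis.Analysis"
begin

definition smooth_curve_on :: "real set \<Rightarrow> (real \<Rightarrow> real^3) \<Rightarrow> bool" where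
  "smooth_curve_on I f \<longleftrightarrow>
     (\<exists>D :: nat \<Rightarrow> real \<Rightarrow> real^3. (\<forall>x\<in>I. D 0 x = f x) \<and>
        (\<forall>k. \<forall>x\<in>I. (D k has_vector_derivative D (Suc k) x) (at x)))"

definition Xs :: "(real \<Rightarrow> real \<Rightarrow> real^3) \<Rightarrow> real \<Rightarrow> real \<Rightarrow> real^3" where
  "Xs X s t = vector_derivative (\<lambda>u. X u t) (at s)"
definition Xt :: "(real \<Rightarrow> real \<Rightarrow> real^3) \<Rightarrow> real \<Rightarrow> real \<Rightarrow> real^3" where
  "Xt X s t = vector_derivative (\<lambda>v. X s v) (at t)"

definition unit_normal :: "(real \<Rightarrow> real \<Rightarrow> real^3) \<Rightarrow> real \<Rightarrow> real \<Rightarrow> real^3" where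
  "unit_normal X s t = (1 / norm (cross3 (Xs X s t) (Xt X s t))) *\<^sub>R cross3 (Xs X s t) (Xt X s t)"

definition gauss_curvature :: "(real \<Rightarrow> real \<Rightarrow> real^3) \<Rightarrow> real \<Rightarrow> real \<Rightarrow> real" where
  "gauss_curvature X s t =
     (let E = Xs X s t \<bullet> Xs X s t; F = Xs X s t \<bullet> Xt X s t; G = Xt X s t \<bullet> Xt X s t;
          n = unit_normal X s t;
          L = Xs (Xs X) s t \<bullet> n; M = Xt (Xs X) s t \<bullet> n; N = Xt (Xt X) s t \<bullet> n
      in (L * N - M\<^sup>2) / (E * G - F\<^sup>2))"

definition regular_param :: "(real \<Rightarrow> real \<Rightarrow> real^3) \<Rightarrow> real set \<Rightarrow> real set \<Rightarrow> bool" where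
  "regular_param X I J \<longleftrightarrow> (\<forall>s\<in>I. \<forall>t\<in>J. cross3 (Xs X s t) (Xt X s t) \<noteq> 0)"

definition cylindrical_surface :: "(real^3) set \<Rightarrow> bool" where
  "cylindrical_surface S \<longleftrightarrow>
     (\<exists>v. v \<noteq> 0 \<and> (\<forall>p\<in>S. \<exists>e>0. \<forall>w. \<bar>w\<bar> < e \<longrightarrow> p + w *\<^sub>R v \<in> S))"

definition planar_curve :: "real set \<Rightarrow> (real \<Rightarrow> real^3) \<Rightarrow> bool" where
  "planar_curve I f \<longleftrightarrow> (\<exists>n d. n \<noteq> 0 \<and> (\<forall>x\<in>I. n \<bullet> f x = d))"

end

theory Submission
  imports Defs "HOL-Computational_Algebra.Polynomial"
begin

text \<open>
  For \<open>X(s,t) = \<alpha>(s) + \<beta>(t)\<close> the mixed derivative \<open>X\<^sub>s\<^sub>t\<close> vanishes, so the Gauss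
  curvature is \<open>K = \<langle>\<alpha>'', \<alpha>' \<times> \<beta>'\<rangle> \<langle>\<beta>'', \<alpha>' \<times> \<beta>'\<rangle> / |\<alpha>' \<times> \<beta>'|\<^sup>4\<close>.

  If \<open>K = 0\<close> and one generator is a straight line, the surface is ruled by its translates.
  Otherwise pick \<open>s\<^sub>0\<close>, \<open>t\<^sub>0\<close> where \<open>\<alpha>' \<times> \<alpha>''\<close> and \<open>\<beta>' \<times> \<beta>''\<close> are nonzero. Wherever
  \<open>\<beta>'(t)\<close> is not orthogonal to \<open>\<alpha>'(s\<^sub>0) \<times> \<alpha>''(s\<^sub>0)\<close>, the factor \<open>\<langle>\<beta>'', \<alpha>' \<times> \<beta>'\<rangle>\<close> must vanish
  for all \<open>s\<close> near \<open>s\<^sub>0\<close>, which forces \<open>\<beta>''(t) \<parallel> \<beta>'(t)\<close>; a clopen argument along the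
  interval then shows that \<open>\<beta>'\<close> is everywhere orthogonal to \<open>\<alpha>'(s\<^sub>0) \<times> \<alpha>''(s\<^sub>0)\<close>, and
  symmetrically. So both generators lie in parallel planes and the surface is a piece of a plane.

  If \<open>K = c \<noteq> 0\<close> and \<open>\<alpha>\<close> lies in a plane with unit normal \<open>n\<close>, write \<open>\<alpha>' = x (e + \<tau> n \<times> e)\<close>
  in an orthonormal frame \<open>(e, n \<times> e, n)\<close>. The curvature equation becomes
  \<open>c x\<^sup>4 G\<^sub>t(\<tau>)\<^sup>2 = x W(s) L\<^sub>t(\<tau>)\<close> with \<open>W = \<langle>n, \<alpha>'' \<times> \<alpha>'\<rangle>\<close>, where \<open>G\<^sub>t(\<tau>) = |(e + \<tau> n \<times> e) \<times> \<beta>'(t)|\<^sup>2\<close> is a positive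
  quadratic and \<open>L\<^sub>t\<close> is linear in \<open>\<tau>\<close>. As the slope \<open>\<tau>\<close> takes infinitely many values, all
  \<open>G\<^sub>t\<close> are proportional as polynomials; differentiating in \<open>t\<close> yields \<open>\<beta>'' \<parallel> \<beta>'\<close>, i.e. \<open>K = 0\<close>.
\<close>

section \<open>Vectors in \<open>\<real>\<^sup>3\<close>\<close>

lemma cross3_cross3: "cross3 x (cross3 y z) = (x \<bullet> z) *\<^sub>R y - (x \<bullet> y) *\<^sub>R z"
  for x y z :: "real^3"
  by (simp add: cross3_simps) (auto simp: vec_eq_iff forall_3 algebra_simps)

lemma inner_cross3_cyclic: "x \<bullet> cross3 y z = y \<bullet> cross3 z x" for x y z :: "real^3"
  by (simp add: cross3_simps)

lemma inner_cross3_cross3: "cross3 x y \<bullet> cross3 x y = (x \<bullet> x) * (y \<bullet> y) - (x \<bullet> y)\<^sup>2"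
  for x y :: "real^3"
  by (simp add: cross3_simps power2_eq_square)

lemma binet_cauchy_cross3:
  "cross3 v e \<bullet> cross3 a b = (v \<bullet> a) * (e \<bullet> b) - (v \<bullet> b) * (e \<bullet> a)" for v e a b :: "real^3"
  by (simp add: cross3_simps)

lemma cross3_eq_0_imp_eq_scaleR:
  fixes x y :: "real^3"
  assumes "cross3 x y = 0" "y \<noteq> 0"
  shows "x = ((x \<bullet> y) / (y \<bullet> y)) *\<^sub>R y"
proof -
  have e: "(y \<bullet> y) *\<^sub>R x = (y \<bullet> x) *\<^sub>R y"
    using arg_cong[OF assms(1), of "cross3 y"] by (simp add: cross3_cross3)
  have "x = (1 / (y \<bullet> y)) *\<^sub>R ((y \<bullet> y) *\<^sub>R x)" using assms(2) by simp
  also have "\<dots> = (1 / (y \<bullet> y)) *\<^sub>R ((y \<bullet> x) *\<^sub>R y)" by (simp only: e)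
  finally show ?thesis by (simp add: inner_commute)
qed

lemma cross3_eq_0_trans:
  fixes x y z :: "real^3"
  assumes "cross3 x y = 0" "cross3 y z = 0" "y \<noteq> 0"
  shows "cross3 x z = 0"
proof -
  have "cross3 z y = 0" using assms(2) cross_skew[of z y] by simp
  then have "z = ((z \<bullet> y) / (y \<bullet> y)) *\<^sub>R y" using cross3_eq_0_imp_eq_scaleR assms(3) by blast
  moreover have "x = ((x \<bullet> y) / (y \<bullet> y)) *\<^sub>R y" using cross3_eq_0_imp_eq_scaleR assms(1,3) by blast
  ultimately show ?thesis by (metis cross_mult_left cross_mult_right cross_refl scaleR_zero_right)
qed

lemma orthogonal_to_frame_imp_eq_0:
  fixes n v r :: "real^3"
  assumes "n \<noteq> 0" "v \<noteq> 0" "n \<bullet> v = 0" "r \<bullet> v = 0" "r \<bullet> n = 0" "r \<bullet> cross3 n v = 0"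
  shows "r = 0"
proof -
  have "cross3 n v \<bullet> cross3 n v = (n \<bullet> n) * (v \<bullet> v)"
    using inner_cross3_cross3[of n v] assms(3) by simp
  with assms(1,2) have "cross3 n v \<noteq> 0" by auto
  moreover have "cross3 r (cross3 n v) = 0" using assms(3-5) by (simp add: cross3_cross3)
  ultimately show ?thesis using cross3_eq_0_imp_eq_scaleR assms(6) by fastforce
qed

lemma orthonormal_frame:
  fixes n e q q' :: "real^3"
  assumes n: "n \<bullet> n = 1" and e: "e \<bullet> e = 1" "e \<bullet> n = 0"
  shows frame_expansion:
      "q = (q \<bullet> e) *\<^sub>R e + (q \<bullet> cross3 n e) *\<^sub>R cross3 n e + (q \<bullet> n) *\<^sub>R n"
    and frame_parseval:
      "q \<bullet> q' = (q \<bullet> e) * (q' \<bullet> e) + (q \<bullet> cross3 n e) * (q' \<bullet> cross3 n e) + (q \<bullet> n) * (q' \<bullet> n)"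
proof -
  have ee: "cross3 n e \<bullet> cross3 n e = 1"
    using inner_cross3_cross3[of n e] n e by (simp add: inner_commute)
  have expansion: "r = (r \<bullet> e) *\<^sub>R e + (r \<bullet> cross3 n e) *\<^sub>R cross3 n e + (r \<bullet> n) *\<^sub>R n" for r
  proof -
    define d where "d = r - ((r \<bullet> e) *\<^sub>R e + (r \<bullet> cross3 n e) *\<^sub>R cross3 n e + (r \<bullet> n) *\<^sub>R n)"
    have "e \<bullet> cross3 n e = 0" "cross3 n e \<bullet> e = 0" "n \<bullet> cross3 n e = 0"
        "cross3 n e \<bullet> n = 0"
      by (simp_all add: dot_cross_self)
    moreover have "n \<bullet> e = 0" using e(2) by (simp add: inner_commute)
    ultimately have "d \<bullet> e = 0" "d \<bullet> n = 0" "d \<bullet> cross3 n e = 0"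
      using n e ee unfolding d_def by (simp_all add: inner_diff_left inner_add_left)
    moreover have "n \<noteq> 0" "e \<noteq> 0" "n \<bullet> e = 0" using n e by (auto simp: inner_commute)
    ultimately have "d = 0" using orthogonal_to_frame_imp_eq_0 by blast
    then show ?thesis unfolding d_def by simp
  qed
  then show "q = (q \<bullet> e) *\<^sub>R e + (q \<bullet> cross3 n e) *\<^sub>R cross3 n e + (q \<bullet> n) *\<^sub>R n" .
  show "q \<bullet> q' = (q \<bullet> e) * (q' \<bullet> e) + (q \<bullet> cross3 n e) * (q' \<bullet> cross3 n e) + (q \<bullet> n) * (q' \<bullet> n)"
    by (subst expansion[of q])
       (simp only: inner_add_left inner_scaleR_left, simp add: inner_commute)
qed

lemma inner_cross3_neq_0_if_orthogonal:
  fixes n a b :: "real^3"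
  assumes "n \<noteq> 0" "n \<bullet> a = 0" "n \<bullet> b = 0" "cross3 a b \<noteq> 0"
  shows "n \<bullet> cross3 a b \<noteq> 0"
proof
  assume h: "n \<bullet> cross3 a b = 0"
  have "cross3 n (cross3 n (cross3 a b)) = - (n \<bullet> n) *\<^sub>R cross3 a b"
    using cross3_cross3[of n n "cross3 a b"] h by simp
  moreover have "cross3 n (cross3 a b) = 0" using assms(2,3) by (simp add: cross3_cross3)
  ultimately show False using assms(1,4) by simp
qed

section \<open>Curves\<close>

lemma has_real_derivative_inner:
  fixes f g :: "real \<Rightarrow> 'a::real_inner"
  assumes "(f has_vector_derivative f') (at x)" "(g has_vector_derivative g') (at x)"
  shows "((\<lambda>x. f x \<bullet> g x) has_real_derivative (f x \<bullet> g' + f' \<bullet> g x)) (at x)"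
proof -
  have "((\<lambda>x. f x \<bullet> g x) has_derivative (\<lambda>h. f x \<bullet> (h *\<^sub>R g') + (h *\<^sub>R f') \<bullet> g x)) (at x)"
    using assms unfolding has_vector_derivative_def by (intro has_derivative_inner)
  then show ?thesis unfolding has_field_derivative_def
    by (rule has_derivative_eq_rhs) (auto simp: algebra_simps)
qed

lemma has_real_derivative_inner_const:
  fixes f :: "real \<Rightarrow> 'a::real_inner"
  assumes "(f has_vector_derivative f') (at x)"
  shows "((\<lambda>x. c \<bullet> f x) has_real_derivative (c \<bullet> f')) (at x)"
  using has_real_derivative_inner[OF has_vector_derivative_const[of c] assms] by simp

lemma has_real_derivative_zero_if_locally_zero:
  fixes f :: "real \<Rightarrow> real"
  assumes "open U" "x \<in> U" "\<And>y. y \<in> U \<Longrightarrow> f y = 0" "(f has_real_derivative D) (at x)"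
  shows "D = 0"
proof -
  have "((\<lambda>y. 0) has_real_derivative D) (at x)"
    by (rule has_field_derivative_transform_within_open[OF assms(4,1,2)]) (simp add: assms(3))
  then show ?thesis using DERIV_const DERIV_unique by blast
qed

lemma continuous_on_avoid_ball:
  fixes f :: "'a::metric_space \<Rightarrow> 'b::t1_space"
  assumes "continuous_on S f" "open S" "x \<in> S" "f x \<noteq> c"
  obtains e where "e > 0" "ball x e \<subseteq> S" "\<And>y. y \<in> ball x e \<Longrightarrow> f y \<noteq> c"
proof -
  obtain e1 where e1: "e1 > 0" "\<forall>y\<in>S. dist x y < e1 \<longrightarrow> f y \<noteq> c"
    using continuous_on_avoid[OF assms(1,3,4)] by blast
  obtain e2 where e2: "e2 > 0" "ball x e2 \<subseteq> S" using assms(2,3) open_contains_ball by blast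
  show ?thesis using e1 e2 by (intro that[of "min e1 e2"]) (auto simp: subset_eq)
qed

lemma has_vector_derivative_zero_imp_eq:
  fixes f :: "real \<Rightarrow> 'b::real_normed_vector"
  assumes "is_interval I" "\<And>x. x \<in> I \<Longrightarrow> (f has_vector_derivative 0) (at x)" "x \<in> I" "y \<in> I"
  shows "f x = f y"
  by (rule has_vector_derivative_zero_constant[OF is_interval_convex[OF assms(1)], of f])
     (use assms in \<open>auto intro: has_vector_derivative_at_within\<close>)

lemma interior_image_if_has_real_derivative_nonzero:
  fixes g :: "real \<Rightarrow> real"
  assumes "open U" "continuous_on U g" "s \<in> U" "(g has_real_derivative k) (at s)" "k \<noteq> 0"
  shows "g s \<in> interior (g ` U)"
proof (rule sussmann_open_mapping[OF assms(1-3) assms(4)[unfolded has_field_derivative_def]])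
  show "bounded_linear (\<lambda>y. y / k)" by (rule bounded_linear_divide)
  show "(*) k \<circ> (\<lambda>y. y / k) = id" using assms(5) by (auto simp: fun_eq_iff)
qed (use assms in \<open>auto simp: interior_open\<close>)

lemma normalized_has_vector_derivative_zero:
  fixes f :: "real \<Rightarrow> 'a::real_inner"
  assumes d: "(f has_vector_derivative k *\<^sub>R f x) (at x)" and nz: "f x \<noteq> 0"
  shows "((\<lambda>x. (1 / norm (f x)) *\<^sub>R f x) has_vector_derivative 0) (at x)"
proof -
  define R where "R = f x \<bullet> f x"
  have R: "R > 0" using nz by (simp add: R_def)
  have "((\<lambda>x. f x \<bullet> f x) has_real_derivative 2 * k * R) (at x)"
    using has_real_derivative_inner[OF d d] by (simp add: R_def algebra_simps)
  from DERIV_chain2[OF DERIV_real_sqrt this] R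
  have "((\<lambda>x. sqrt (f x \<bullet> f x)) has_real_derivative inverse (sqrt R) / 2 * (2 * k * R)) (at x)"
    by (simp add: R_def)
  moreover have "inverse (sqrt R) / 2 * (2 * k * R) = k * sqrt R"
    using R by (simp add: field_simps)
  ultimately have "((\<lambda>x. sqrt (f x \<bullet> f x)) has_real_derivative k * sqrt R) (at x)"
    by (simp only:)
  from DERIV_inverse_fun[OF this] R
  have "((\<lambda>x. inverse (sqrt (f x \<bullet> f x))) has_real_derivative - (k * sqrt R / R)) (at x)"
    by (simp add: R_def field_simps)
  moreover have "k * sqrt R / R = k / sqrt R"
    using R by (simp add: field_simps)
  ultimately have "((\<lambda>x. inverse (sqrt (f x \<bullet> f x))) has_real_derivative - (k / sqrt R)) (at x)"
    by (simp only:)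
  from has_vector_derivative_scaleR[OF this d]
  have "((\<lambda>x. inverse (sqrt (f x \<bullet> f x)) *\<^sub>R f x) has_vector_derivative
      inverse (sqrt R) *\<^sub>R (k *\<^sub>R f x) + - (k / sqrt R) *\<^sub>R f x) (at x)"
    by (simp only: R_def)
  moreover have "inverse (sqrt R) *\<^sub>R (k *\<^sub>R f x) + - (k / sqrt R) *\<^sub>R f x = 0"
    by (simp add: divide_inverse algebra_simps)
  ultimately have "((\<lambda>x. inverse (sqrt (f x \<bullet> f x)) *\<^sub>R f x) has_vector_derivative 0) (at x)"
    by (simp only:)
  then show ?thesis by (simp add: norm_eq_sqrt_inner divide_inverse)
qed

lemma parallel_if_derivative_parallel:
  fixes f f' :: "real \<Rightarrow> real^3"
  assumes S: "convex S"
    and d: "\<And>x. x \<in> S \<Longrightarrow> (f has_vector_derivative f' x) (at x)"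
    and nz: "\<And>x. x \<in> S \<Longrightarrow> f x \<noteq> 0"
    and par: "\<And>x. x \<in> S \<Longrightarrow> cross3 (f x) (f' x) = 0"
    and xy: "x \<in> S" "y \<in> S"
  shows "cross3 (f x) (f y) = 0"
proof -
  define u where "u x = (1 / norm (f x)) *\<^sub>R f x" for x
  have "(u has_vector_derivative 0) (at x within S)" if x: "x \<in> S" for x
  proof -
    have "cross3 (f' x) (f x) = 0" using par[OF x] cross_skew[of "f x" "f' x"] by simp
    then have "f' x = ((f' x \<bullet> f x) / (f x \<bullet> f x)) *\<^sub>R f x"
      using cross3_eq_0_imp_eq_scaleR nz x by blast
    then have "(f has_vector_derivative ((f' x \<bullet> f x) / (f x \<bullet> f x)) *\<^sub>R f x) (at x)"
      using d[OF x] by simp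
    from normalized_has_vector_derivative_zero[OF this nz[OF x]] show ?thesis
      unfolding u_def by (rule has_vector_derivative_at_within)
  qed
  then obtain c where c: "\<And>x. x \<in> S \<Longrightarrow> u x = c"
    using has_vector_derivative_zero_constant[OF S] by blast
  have fz: "f z = norm (f z) *\<^sub>R c" if "z \<in> S" for z
    using c[OF that] nz[OF that] unfolding u_def by auto
  show ?thesis
    by (subst fz[OF xy(1)], subst fz[OF xy(2)]) (simp add: cross_mult_left cross_mult_right)
qed

lemma smooth_curve_on_derivatives:
  fixes f :: "real \<Rightarrow> real^3"
  assumes "smooth_curve_on I f" "open I"
  obtains f' f'' where "\<And>x. x \<in> I \<Longrightarrow> (f has_vector_derivative f' x) (at x)"
    "\<And>x. x \<in> I \<Longrightarrow> (f' has_vector_derivative f'' x) (at x)"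
    "continuous_on I f'" "continuous_on I f''"
proof -
  obtain D :: "nat \<Rightarrow> real \<Rightarrow> real^3" where D0: "\<forall>x\<in>I. D 0 x = f x"
    and D: "\<And>k x. x \<in> I \<Longrightarrow> (D k has_vector_derivative D (Suc k) x) (at x)"
    using assms(1) unfolding smooth_curve_on_def by blast
  have "(f has_vector_derivative D 1 x) (at x)" if "x \<in> I" for x
    by (rule has_vector_derivative_transform_within_open[OF _ assms(2) that, of "D 0"])
       (use D that D0 in auto)
  moreover have "continuous_on I (D (Suc k))" for k
    by (rule continuous_on_vector_derivative)
       (use D in \<open>blast intro: has_vector_derivative_at_within\<close>)
  moreover have "(D 1 has_vector_derivative D 2 x) (at x)" if "x \<in> I" for x
    using D[OF that, of 1] by (simp add: numeral_2_eq_2)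
  ultimately show ?thesis
    using that[of "D 1" "D 2"] by (metis One_nat_def Suc_1)
qed

lemma planar_curve_unit_normal:
  fixes f f' f'' :: "real \<Rightarrow> real^3"
  assumes "open I" and d: "\<And>x. x \<in> I \<Longrightarrow> (f has_vector_derivative f' x) (at x)"
    and d2: "\<And>x. x \<in> I \<Longrightarrow> (f' has_vector_derivative f'' x) (at x)"
    and "planar_curve I f"
  obtains n where "n \<bullet> n = 1" "\<And>x. x \<in> I \<Longrightarrow> n \<bullet> f' x = 0" "\<And>x. x \<in> I \<Longrightarrow> n \<bullet> f'' x = 0"
proof -
  obtain n d where n: "n \<noteq> 0" and nd: "\<And>x. x \<in> I \<Longrightarrow> n \<bullet> f x = d"
    using assms(4) unfolding planar_curve_def by blast
  have n1: "n \<bullet> f' x = 0" if x: "x \<in> I" for x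
    using has_real_derivative_zero_if_locally_zero[OF assms(1) x, of "\<lambda>x. n \<bullet> f x - d"] nd
      DERIV_diff[OF has_real_derivative_inner_const[OF d[OF x], of n] DERIV_const[of d]] by auto
  have n2: "n \<bullet> f'' x = 0" if x: "x \<in> I" for x
    using has_real_derivative_zero_if_locally_zero[OF assms(1) x, of "\<lambda>x. n \<bullet> f' x"] n1
      has_real_derivative_inner_const[OF d2[OF x], of n] by auto
  show ?thesis
  proof (rule that[of "n /\<^sub>R norm n"])
    show "(n /\<^sub>R norm n) \<bullet> (n /\<^sub>R norm n) = 1"
      using n by (simp add: dot_square_norm power2_eq_square)
  qed (simp_all add: n1 n2)
qed

section \<open>Gauss curvature of translation surfaces\<close>

text \<open>The arguments stand for \<open>\<alpha>'(s)\<close>, \<open>\<alpha>''(s)\<close>, \<open>\<beta>'(t)\<close>, \<open>\<beta>''(t)\<close>.\<close>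

definition translation_curvature :: "real^3 \<Rightarrow> real^3 \<Rightarrow> real^3 \<Rightarrow> real^3 \<Rightarrow> real" where
  "translation_curvature a A b B =
     (A \<bullet> cross3 a b) * (B \<bullet> cross3 a b) / norm (cross3 a b) ^ 4"

lemma translation_curvature_commute:
  "translation_curvature b B a A = translation_curvature a A b B"
  by (simp add: translation_curvature_def cross_skew[of b a])

lemma Xs_translation_surface:
  "(\<alpha> has_vector_derivative a) (at s) \<Longrightarrow> Xs (\<lambda>s t. \<alpha> s + \<beta> t) s t = a"
  for \<alpha> \<beta> :: "real \<Rightarrow> real^3"
  unfolding Xs_def by (auto intro!: vector_derivative_at derivative_eq_intros)

lemma Xt_translation_surface:
  "(\<beta> has_vector_derivative b) (at t) \<Longrightarrow> Xt (\<lambda>s t. \<alpha> s + \<beta> t) s t = b"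
  for \<alpha> \<beta> :: "real \<Rightarrow> real^3"
  unfolding Xt_def by (auto intro!: vector_derivative_at derivative_eq_intros)

lemma gauss_curvature_translation_surface:
  fixes \<alpha> \<beta> a A b B :: "real \<Rightarrow> real^3"
  assumes I: "open I" "s \<in> I" and J: "open J" "t \<in> J"
    and da: "\<And>x. x \<in> I \<Longrightarrow> (\<alpha> has_vector_derivative a x) (at x)"
    and dA: "\<And>x. x \<in> I \<Longrightarrow> (a has_vector_derivative A x) (at x)"
    and db: "\<And>x. x \<in> J \<Longrightarrow> (\<beta> has_vector_derivative b x) (at x)"
    and dB: "\<And>x. x \<in> J \<Longrightarrow> (b has_vector_derivative B x) (at x)"
  shows "gauss_curvature (\<lambda>s t. \<alpha> s + \<beta> t) s t = translation_curvature (a s) (A s) (b t) (B t)"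
proof -
  define X where "X = (\<lambda>s t. \<alpha> s + \<beta> t)"
  have Xs: "Xs X u v = a u" if "u \<in> I" for u v
    using Xs_translation_surface[OF da[OF that]] by (simp add: X_def)
  have Xt: "Xt X u v = b v" if "v \<in> J" for u v
    using Xt_translation_surface[OF db[OF that]] by (simp add: X_def)
  have "Xs (Xs X) s t = A s"
    unfolding Xs_def[of "Xs X"]
    by (rule vector_derivative_at,
        rule has_vector_derivative_transform_within_open[OF dA[OF I(2)] I])
       (simp add: Xs)
  moreover have "Xt (Xs X) s t = 0"
    using Xs[OF I(2)] by (simp add: Xt_def)
  moreover have "Xt (Xt X) s t = B t"
    unfolding Xt_def[of "Xt X"]
    by (rule vector_derivative_at,
        rule has_vector_derivative_transform_within_open[OF dB[OF J(2)] J])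
       (simp add: Xt)
  moreover have "(a s \<bullet> a s) * (b t \<bullet> b t) - (a s \<bullet> b t)\<^sup>2 = (norm (cross3 (a s) (b t)))\<^sup>2"
    by (simp add: inner_cross3_cross3 power2_norm_eq_inner)
  ultimately show ?thesis
    unfolding X_def[symmetric] gauss_curvature_def translation_curvature_def Let_def unit_normal_def
    by (simp add: Xs[OF I(2)] Xt[OF J(2)] power2_eq_square power4_eq_xxxx field_simps)
qed

section \<open>Flat translation surfaces\<close>

lemma curve_on_line_if_derivative_parallel:
  fixes \<alpha> a :: "real \<Rightarrow> real^3" and v :: "real^3"
  assumes I: "is_interval I" and da: "\<And>x. x \<in> I \<Longrightarrow> (\<alpha> has_vector_derivative a x) (at x)"
    and par: "\<And>x. x \<in> I \<Longrightarrow> cross3 (a x) v = 0" and v: "v \<noteq> 0" and xy: "x \<in> I" "y \<in> I"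
  shows "\<alpha> x = \<alpha> y + ((v \<bullet> \<alpha> x - v \<bullet> \<alpha> y) / (v \<bullet> v)) *\<^sub>R v"
proof -
  define h where "h x = \<alpha> x - ((v \<bullet> \<alpha> x) / (v \<bullet> v)) *\<^sub>R v" for x
  have "(h has_vector_derivative 0) (at x)" if x: "x \<in> I" for x
  proof -
    have "((\<lambda>x. (v \<bullet> \<alpha> x) / (v \<bullet> v)) has_real_derivative (v \<bullet> a x) / (v \<bullet> v)) (at x)"
      using DERIV_cdivide[OF has_real_derivative_inner_const[OF da[OF x], of v], of "v \<bullet> v"] by simp
    from has_vector_derivative_diff[OF da[OF x]
        has_vector_derivative_scaleR[OF this has_vector_derivative_const[of v]]]
    have "(h has_vector_derivative a x - ((v \<bullet> a x) / (v \<bullet> v)) *\<^sub>R v) (at x)"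
      unfolding h_def by simp
    moreover have "a x - ((v \<bullet> a x) / (v \<bullet> v)) *\<^sub>R v = 0"
      using cross3_eq_0_imp_eq_scaleR[OF par[OF x] v] by (metis diff_self inner_commute)
    ultimately show ?thesis by simp
  qed
  then have "h x = h y" using has_vector_derivative_zero_imp_eq[OF I _ xy] by blast
  then show ?thesis
    unfolding h_def by (simp add: diff_divide_distrib scaleR_diff_left algebra_simps)
qed

lemma cylindrical_if_straight_generator:
  fixes \<alpha> \<beta> a A :: "real \<Rightarrow> real^3"
  assumes oI: "open I" and iI: "is_interval I"
    and da: "\<And>x. x \<in> I \<Longrightarrow> (\<alpha> has_vector_derivative a x) (at x)"
    and dA: "\<And>x. x \<in> I \<Longrightarrow> (a has_vector_derivative A x) (at x)"
    and straight: "\<And>x. x \<in> I \<Longrightarrow> cross3 (a x) (A x) = 0"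
    and anz: "\<And>x. x \<in> I \<Longrightarrow> a x \<noteq> 0" and s0: "s0 \<in> I"
  shows "cylindrical_surface ((\<lambda>(s, t). \<alpha> s + \<beta> t) ` (I \<times> J))"
  unfolding cylindrical_surface_def
proof (intro exI[of _ "a s0"] conjI ballI)
  define v where "v = a s0"
  show "a s0 \<noteq> 0" using anz s0 by simp
  then have v: "v \<noteq> 0" "v \<bullet> v > 0" by (simp_all add: v_def)
  have av: "cross3 (a x) v = 0" if "x \<in> I" for x
    unfolding v_def
    by (rule parallel_if_derivative_parallel[OF is_interval_convex[OF iI] dA anz straight that s0])
  fix p assume "p \<in> (\<lambda>(s, t). \<alpha> s + \<beta> t) ` (I \<times> J)"
  then obtain s t where st: "s \<in> I" "t \<in> J" and p: "p = \<alpha> s + \<beta> t" by auto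
  define g where "g x = v \<bullet> \<alpha> x" for x
  have "v \<bullet> a s \<noteq> 0"
  proof
    assume "v \<bullet> a s = 0"
    then have "a s = 0"
      using cross3_eq_0_imp_eq_scaleR[OF av[OF st(1)] v(1)] by (simp add: inner_commute)
    then show False using anz st by simp
  qed
  moreover have "continuous_on I g"
    unfolding g_def by (rule continuous_at_imp_continuous_on)
      (use has_real_derivative_inner_const[OF da, of _ v] DERIV_isCont in blast)
  ultimately have "g s \<in> interior (g ` I)"
    using interior_image_if_has_real_derivative_nonzero[OF oI _ st(1)]
      has_real_derivative_inner_const[OF da[OF st(1)], of v]
    unfolding g_def by blast
  then obtain \<epsilon> where \<epsilon>: "\<epsilon> > 0" "ball (g s) \<epsilon> \<subseteq> g ` I" by (auto simp: mem_interior)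
  show "\<exists>e>0. \<forall>w. \<bar>w\<bar> < e \<longrightarrow> p + w *\<^sub>R a s0 \<in> (\<lambda>(s, t). \<alpha> s + \<beta> t) ` (I \<times> J)"
  proof (intro exI[of _ "\<epsilon> / (v \<bullet> v)"] conjI allI impI)
    show "\<epsilon> / (v \<bullet> v) > 0" using \<epsilon> v by simp
    fix w :: real assume "\<bar>w\<bar> < \<epsilon> / (v \<bullet> v)"
    then have "g s + w * (v \<bullet> v) \<in> ball (g s) \<epsilon>"
      using v by (simp add: dist_real_def abs_mult pos_less_divide_eq)
    then obtain x where x: "x \<in> I" "g x = g s + w * (v \<bullet> v)" using \<epsilon>(2) by (metis imageE subsetD)
    have "\<alpha> x = \<alpha> s + w *\<^sub>R v"
      using curve_on_line_if_derivative_parallel[OF iI da av v(1) x(1) st(1)] x(2) v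
      by (simp add: g_def)
    then show "p + w *\<^sub>R a s0 \<in> (\<lambda>(s, t). \<alpha> s + \<beta> t) ` (I \<times> J)"
      unfolding p v_def using x(1) st(2) by (auto intro!: image_eqI[where x="(x, t)"])
  qed
qed

lemma has_derivative_translation_surface:
  fixes \<alpha> \<beta> :: "real \<Rightarrow> 'a::real_normed_vector"
  assumes "(\<alpha> has_vector_derivative a) (at s)" "(\<beta> has_vector_derivative b) (at t)"
  shows "((\<lambda>x. \<alpha> (fst x) + \<beta> (snd x)) has_derivative (\<lambda>h. fst h *\<^sub>R a + snd h *\<^sub>R b)) (at (s, t))"
proof -
  have "((\<alpha> \<circ> fst) has_derivative ((\<lambda>h. h *\<^sub>R a) \<circ> fst)) (at (s, t))"
    by (rule diff_chain_at)
       (use assms(1) in \<open>auto intro: derivative_intros simp: has_vector_derivative_def\<close>)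
  moreover have "((\<beta> \<circ> snd) has_derivative ((\<lambda>h. h *\<^sub>R b) \<circ> snd)) (at (s, t))"
    by (rule diff_chain_at)
       (use assms(2) in \<open>auto intro: derivative_intros simp: has_vector_derivative_def\<close>)
  ultimately show ?thesis by (simp add: o_def has_derivative_add)
qed

lemma inverse_2x2:
  fixes p q r u :: real
  assumes "p * u - q * r \<noteq> 0"
  defines "D \<equiv> p * u - q * r"
  shows "p * ((u / D) * y1 - (q / D) * y2) + q * ((- r / D) * y1 + (p / D) * y2) = y1"
    and "r * ((u / D) * y1 - (q / D) * y2) + u * ((- r / D) * y1 + (p / D) * y2) = y2"
proof -
  have "p * ((u / D) * y1 - (q / D) * y2) + q * ((- r / D) * y1 + (p / D) * y2) = (D * y1) / D"
    "r * ((u / D) * y1 - (q / D) * y2) + u * ((- r / D) * y1 + (p / D) * y2) = (D * y2) / D"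
    using assms by (simp_all add: divide_simps) (simp_all add: algebra_simps)
  then show "p * ((u / D) * y1 - (q / D) * y2) + q * ((- r / D) * y1 + (p / D) * y2) = y1"
    "r * ((u / D) * y1 - (q / D) * y2) + u * ((- r / D) * y1 + (p / D) * y2) = y2"
    using assms by simp_all
qed

lemma plane_coordinates_interior:
  fixes \<alpha> \<beta> a b :: "real \<Rightarrow> real^3" and v e :: "real^3"
  assumes oI: "open I" and oJ: "open J" and st: "s \<in> I" "t \<in> J"
    and da: "\<And>x. x \<in> I \<Longrightarrow> (\<alpha> has_vector_derivative a x) (at x)"
    and db: "\<And>x. x \<in> J \<Longrightarrow> (\<beta> has_vector_derivative b x) (at x)"
    and jacobian: "(v \<bullet> a s) * (e \<bullet> b t) - (v \<bullet> b t) * (e \<bullet> a s) \<noteq> 0"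
  shows "(v \<bullet> (\<alpha> s + \<beta> t), e \<bullet> (\<alpha> s + \<beta> t))
           \<in> interior ((\<lambda>(s, t). (v \<bullet> (\<alpha> s + \<beta> t), e \<bullet> (\<alpha> s + \<beta> t))) ` (I \<times> J))"
proof -
  define \<Phi> where "\<Phi> x = (v \<bullet> (\<alpha> (fst x) + \<beta> (snd x)), e \<bullet> (\<alpha> (fst x) + \<beta> (snd x)))" for x
  define \<Phi>' where
    "\<Phi>' s t h = (v \<bullet> (fst h *\<^sub>R a s + snd h *\<^sub>R b t), e \<bullet> (fst h *\<^sub>R a s + snd h *\<^sub>R b t))"
    for s t and h :: "real \<times> real"
  have d\<Phi>: "(\<Phi> has_derivative \<Phi>' s t) (at (s, t))" if "s \<in> I" "t \<in> J" for s t
    unfolding \<Phi>_def \<Phi>'_def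
    by (intro has_derivative_Pair has_derivative_inner_right has_derivative_translation_surface
        da db that)
  have "continuous_on (I \<times> J) \<Phi>"
    by (rule continuous_at_imp_continuous_on) (auto intro: has_derivative_continuous d\<Phi>)
  moreover
  define D where "D = (v \<bullet> a s) * (e \<bullet> b t) - (v \<bullet> b t) * (e \<bullet> a s)"
  define g where "g y = (((e \<bullet> b t) / D) * fst y - ((v \<bullet> b t) / D) * snd y,
                        (- (e \<bullet> a s) / D) * fst y + ((v \<bullet> a s) / D) * snd y)" for y :: "real \<times> real"
  have "bounded_linear g" unfolding g_def
    by (intro bounded_linear_Pair bounded_linear_add bounded_linear_sub bounded_linear_const_mult
        bounded_linear_fst bounded_linear_snd)
  moreover have "\<Phi>' s t (g y) = y" for y
    using inverse_2x2[OF jacobian, of "fst y" "snd y"] unfolding \<Phi>'_def g_def D_def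
    by (simp add: inner_add_right algebra_simps prod_eq_iff)
  then have "\<Phi>' s t \<circ> g = id" by auto
  ultimately have "\<Phi> (s, t) \<in> interior (\<Phi> ` (I \<times> J))"
    by (intro sussmann_open_mapping[OF open_Times[OF oI oJ] _ _ d\<Phi>[OF st]])
       (use st open_Times[OF oI oJ] in \<open>auto simp: interior_open\<close>)
  moreover have "\<Phi> = (\<lambda>(s, t). (v \<bullet> (\<alpha> s + \<beta> t), e \<bullet> (\<alpha> s + \<beta> t)))"
    by (auto simp: \<Phi>_def fun_eq_iff)
  ultimately show ?thesis by simp
qed

lemma cylindrical_if_planar_generators:
  fixes \<alpha> \<beta> a b :: "real \<Rightarrow> real^3" and n v :: "real^3"
  assumes oI: "open I" and iI: "is_interval I" and oJ: "open J" and iJ: "is_interval J"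
    and da: "\<And>x. x \<in> I \<Longrightarrow> (\<alpha> has_vector_derivative a x) (at x)"
    and db: "\<And>x. x \<in> J \<Longrightarrow> (\<beta> has_vector_derivative b x) (at x)"
    and n: "n \<noteq> 0" and na: "\<And>s. s \<in> I \<Longrightarrow> n \<bullet> a s = 0" and nb: "\<And>t. t \<in> J \<Longrightarrow> n \<bullet> b t = 0"
    and reg: "\<And>s t. s \<in> I \<Longrightarrow> t \<in> J \<Longrightarrow> cross3 (a s) (b t) \<noteq> 0"
    and v: "v \<noteq> 0" "n \<bullet> v = 0"
  shows "cylindrical_surface ((\<lambda>(s, t). \<alpha> s + \<beta> t) ` (I \<times> J))"
proof -
  define S where "S = (\<lambda>(s, t). \<alpha> s + \<beta> t) ` (I \<times> J)"
  define e where "e = cross3 n v"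
  txt \<open>\<open>S\<close> lies in a plane normal to \<open>n\<close>, on which \<open>(v \<bullet> p, e \<bullet> p)\<close> are coordinates; their
    pullback to the parameters is an open map, so \<open>S\<close> contains a segment in direction \<open>v\<close>
    around each of its points.\<close>
  have n\<alpha>: "n \<bullet> \<alpha> x = n \<bullet> \<alpha> y" if "x \<in> I" "y \<in> I" for x y
    using has_vector_derivative_zero_imp_eq[OF iI _ that, of "\<lambda>x. n \<bullet> \<alpha> x"]
      has_real_derivative_inner_const[OF da, of _ n] na
    by (simp add: has_real_derivative_iff_has_vector_derivative[symmetric])
  have n\<beta>: "n \<bullet> \<beta> x = n \<bullet> \<beta> y" if "x \<in> J" "y \<in> J" for x y
    using has_vector_derivative_zero_imp_eq[OF iJ _ that, of "\<lambda>x. n \<bullet> \<beta> x"]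
      has_real_derivative_inner_const[OF db, of _ n] nb
    by (simp add: has_real_derivative_iff_has_vector_derivative[symmetric])
  have "\<exists>\<epsilon>>0. \<forall>w. \<bar>w\<bar> < \<epsilon> \<longrightarrow> p + w *\<^sub>R v \<in> S" if "p \<in> S" for p
  proof -
    obtain s t where st: "s \<in> I" "t \<in> J" and p: "p = \<alpha> s + \<beta> t" using \<open>p \<in> S\<close> S_def by auto
    have "cross3 v e = (v \<bullet> v) *\<^sub>R n" using v by (simp add: e_def cross3_cross3 inner_commute)
    then have "(v \<bullet> a s) * (e \<bullet> b t) - (v \<bullet> b t) * (e \<bullet> a s) = (v \<bullet> v) * (n \<bullet> cross3 (a s) (b t))"
      by (simp flip: binet_cauchy_cross3)
    also have "\<dots> \<noteq> 0"
      using inner_cross3_neq_0_if_orthogonal[OF n na[OF st(1)] nb[OF st(2)] reg[OF st]] v by simp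
    finally obtain \<epsilon> where \<epsilon>: "\<epsilon> > 0"
      "ball (v \<bullet> p, e \<bullet> p) \<epsilon> \<subseteq> (\<lambda>(s, t). (v \<bullet> (\<alpha> s + \<beta> t), e \<bullet> (\<alpha> s + \<beta> t))) ` (I \<times> J)"
      using plane_coordinates_interior[OF oI oJ st da db, where v=v and e=e]
      unfolding p by (auto simp: mem_interior)
    have vv: "v \<bullet> v > 0" using v by simp
    show ?thesis
    proof (intro exI[of _ "\<epsilon> / (v \<bullet> v)"] conjI allI impI)
      show "\<epsilon> / (v \<bullet> v) > 0" using \<epsilon> vv by simp
      fix w :: real assume "\<bar>w\<bar> < \<epsilon> / (v \<bullet> v)"
      then have "(v \<bullet> p + w * (v \<bullet> v), e \<bullet> p) \<in> ball (v \<bullet> p, e \<bullet> p) \<epsilon>"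
        using vv by (simp add: dist_Pair_Pair dist_real_def abs_mult pos_less_divide_eq)
      then obtain x y where xy: "x \<in> I" "y \<in> J"
        and coords: "v \<bullet> (\<alpha> x + \<beta> y) = v \<bullet> p + w * (v \<bullet> v)" "e \<bullet> (\<alpha> x + \<beta> y) = e \<bullet> p"
        using \<epsilon>(2) by auto
      define r where "r = \<alpha> x + \<beta> y - (p + w *\<^sub>R v)"
      have "e \<bullet> v = 0" by (simp add: e_def dot_cross_self)
      then have "v \<bullet> r = 0" "e \<bullet> r = 0"
        using coords by (simp_all add: r_def inner_diff_right inner_add_right)
      moreover have "n \<bullet> r = 0"
        using n\<alpha>[OF xy(1) st(1)] n\<beta>[OF xy(2) st(2)] v(2)
        by (simp add: r_def p inner_diff_right inner_add_right)
      ultimately have "r \<bullet> v = 0" "r \<bullet> e = 0" "r \<bullet> n = 0" by (simp_all add: inner_commute)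
      then have "r = 0" using orthogonal_to_frame_imp_eq_0[OF n v] by (simp add: e_def)
      then have "p + w *\<^sub>R v = (\<lambda>(s, t). \<alpha> s + \<beta> t) (x, y)" by (simp add: r_def)
      then show "p + w *\<^sub>R v \<in> S" using xy unfolding S_def by blast
    qed
  qed
  then show ?thesis unfolding cylindrical_surface_def S_def[symmetric] using v(1) by blast
qed

lemma cross3_eq_0_if_flat_and_transversal:
  fixes a A :: "real \<Rightarrow> real^3" and w W :: "real^3"
  assumes oI: "open I" and s0: "s0 \<in> I"
    and dA: "\<And>x. x \<in> I \<Longrightarrow> (a has_vector_derivative A x) (at x)"
    and ca: "continuous_on I a" and cA: "continuous_on I A"
    and flat: "\<And>s. s \<in> I \<Longrightarrow> (A s \<bullet> cross3 (a s) w) * (W \<bullet> cross3 (a s) w) = 0"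
    and transversal: "cross3 (a s0) (A s0) \<bullet> w \<noteq> 0"
  shows "cross3 w W = 0"
proof (rule ccontr)
  txt \<open>Near \<open>s\<^sub>0\<close> the first factor is nonzero, so \<open>a\<close> stays orthogonal to \<open>w \<times> W\<close>; hence so does
    \<open>A s\<^sub>0\<close>, and \<open>w \<times> W\<close> is parallel to \<open>a s\<^sub>0 \<times> A s\<^sub>0\<close>, which is not orthogonal to \<open>w\<close>.\<close>
  define n where "n = cross3 (a s0) (A s0)"
  define m where "m = cross3 w W"
  assume "cross3 w W \<noteq> 0"
  then have "m \<noteq> 0" by (simp add: m_def)
  have "A s0 \<bullet> cross3 (a s0) w \<noteq> 0"
    using transversal by (simp add: cross3_simps)
  moreover have "continuous_on I (\<lambda>s. A s \<bullet> cross3 (a s) w)"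
    by (intro continuous_intros cA continuous_on_cross ca)
  ultimately obtain \<epsilon> where \<epsilon>: "\<epsilon> > 0" "ball s0 \<epsilon> \<subseteq> I"
    "\<And>s. s \<in> ball s0 \<epsilon> \<Longrightarrow> A s \<bullet> cross3 (a s) w \<noteq> 0"
    using continuous_on_avoid_ball[of I "\<lambda>s. A s \<bullet> cross3 (a s) w" s0 0] oI s0 by blast
  have am: "m \<bullet> a s = 0" if "s \<in> ball s0 \<epsilon>" for s
    using flat[of s] \<epsilon> that inner_cross3_cyclic[of W "a s" w] by (auto simp: m_def inner_commute)
  have "m \<bullet> A s0 = 0"
  proof (rule has_real_derivative_zero_if_locally_zero[where f="\<lambda>s. m \<bullet> a s"])
    show "open (ball s0 \<epsilon>)" "s0 \<in> ball s0 \<epsilon>" using \<epsilon>(1) by simp_all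
  qed (use am has_real_derivative_inner_const[OF dA[OF s0]] in auto)
  moreover have "m \<bullet> a s0 = 0" using am \<epsilon>(1) by simp
  ultimately have "cross3 n m = 0"
    using cross3_cross3[of m "a s0" "A s0"] cross_skew[of m n] by (simp add: n_def inner_commute)
  then have "n = ((n \<bullet> m) / (m \<bullet> m)) *\<^sub>R m" using cross3_eq_0_imp_eq_scaleR \<open>m \<noteq> 0\<close> by blast
  from arg_cong[OF this, of "\<lambda>x. x \<bullet> w"] have "n \<bullet> w = 0" by (simp add: m_def dot_cross_self)
  then show False using transversal by (simp add: n_def)
qed

lemma orthogonal_if_straight_where_transversal:
  fixes b B :: "real \<Rightarrow> real^3" and n :: "real^3"
  assumes oJ: "open J" and iJ: "is_interval J"
    and dB: "\<And>t. t \<in> J \<Longrightarrow> (b has_vector_derivative B t) (at t)" and cb: "continuous_on J b"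
    and bnz: "\<And>t. t \<in> J \<Longrightarrow> b t \<noteq> 0"
    and straight: "\<And>t. t \<in> J \<Longrightarrow> n \<bullet> b t \<noteq> 0 \<Longrightarrow> cross3 (b t) (B t) = 0"
    and t0: "t0 \<in> J" "cross3 (b t0) (B t0) \<noteq> 0" and t: "t \<in> J"
  shows "n \<bullet> b t = 0"
proof (rule ccontr)
  assume nt: "n \<bullet> b t \<noteq> 0"
  txt \<open>The parameters at which \<open>b\<close> is parallel to \<open>b t\<close> form a clopen subset of \<open>J\<close>.\<close>
  define C where "C = {t' \<in> J. cross3 (b t') (b t) = 0}"
  have nC: "n \<bullet> b t' \<noteq> 0" if "t' \<in> C" for t'
  proof -
    define k where "k = (b t' \<bullet> b t) / (b t \<bullet> b t)"
    have bt': "b t' = k *\<^sub>R b t"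
      using that cross3_eq_0_imp_eq_scaleR bnz[OF t] by (auto simp: C_def k_def)
    moreover have "b t' \<noteq> 0" using that bnz by (auto simp: C_def)
    ultimately have "k \<noteq> 0" by auto
    then show ?thesis using nt by (simp add: bt')
  qed
  have "closedin (top_of_set J) C"
    unfolding C_def
    by (intro continuous_closedin_preimage_constant continuous_on_cross cb continuous_on_const)
  moreover have "open C"
  proof (rule openI)
    fix t' assume t': "t' \<in> C"
    then have t'J: "t' \<in> J" and t't: "cross3 (b t') (b t) = 0" by (auto simp: C_def)
    have "continuous_on J (\<lambda>t. n \<bullet> b t)" by (intro continuous_intros cb)
    then obtain \<epsilon> where \<epsilon>: "\<epsilon> > 0" "ball t' \<epsilon> \<subseteq> J" "\<And>y. y \<in> ball t' \<epsilon> \<Longrightarrow> n \<bullet> b y \<noteq> 0"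
      using continuous_on_avoid_ball[of J "\<lambda>t. n \<bullet> b t" t' 0] oJ t'J nC[OF t'] by blast
    have "y \<in> C" if y: "y \<in> ball t' \<epsilon>" for y
    proof -
      have "cross3 (b y) (b t') = 0"
        by (rule parallel_if_derivative_parallel[of "ball t' \<epsilon>" b B])
           (use \<epsilon> dB bnz straight y in auto)
      then have "cross3 (b y) (b t) = 0" using cross3_eq_0_trans t't bnz[OF t'J] by blast
      then show ?thesis using y \<epsilon>(2) by (auto simp: C_def)
    qed
    then show "\<exists>e>0. ball t' e \<subseteq> C" using \<epsilon>(1) by blast
  qed
  then have "openin (top_of_set J) C" by (simp add: openin_open_eq[OF oJ] C_def)
  ultimately have "C = J"
    using connected_clopen[THEN iffD1, OF is_interval_connected[OF iJ], rule_format, of C] t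
    by (auto simp: C_def)
  then have "n \<bullet> b t0 \<noteq> 0" using nC t0(1) by blast
  then show False using straight t0 by blast
qed

lemma binormal_orthogonal_if_flat:
  fixes a A b B :: "real \<Rightarrow> real^3"
  assumes oI: "open I" and dA: "\<And>x. x \<in> I \<Longrightarrow> (a has_vector_derivative A x) (at x)"
    and ca: "continuous_on I a" and cA: "continuous_on I A"
    and oJ: "open J" and iJ: "is_interval J"
    and dB: "\<And>x. x \<in> J \<Longrightarrow> (b has_vector_derivative B x) (at x)"
    and cb: "continuous_on J b" and bnz: "\<And>t. t \<in> J \<Longrightarrow> b t \<noteq> 0"
    and flat: "\<And>s t. s \<in> I \<Longrightarrow> t \<in> J \<Longrightarrow>
              (A s \<bullet> cross3 (a s) (b t)) * (B t \<bullet> cross3 (a s) (b t)) = 0"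
    and s0: "s0 \<in> I" and t0: "t0 \<in> J" "cross3 (b t0) (B t0) \<noteq> 0"
    and t: "t \<in> J"
  shows "cross3 (a s0) (A s0) \<bullet> b t = 0"
proof (rule orthogonal_if_straight_where_transversal[OF oJ iJ dB cb bnz _ t0 t])
  fix t assume "t \<in> J" "cross3 (a s0) (A s0) \<bullet> b t \<noteq> 0"
  then show "cross3 (b t) (B t) = 0"
    using cross3_eq_0_if_flat_and_transversal[OF oI s0 dA ca cA flat] by blast
qed

lemma flat_translation_surface_cylindrical:
  fixes \<alpha> \<beta> a A b B :: "real \<Rightarrow> real^3"
  assumes oI: "open I" and iI: "is_interval I" and neI: "I \<noteq> {}"
    and oJ: "open J" and iJ: "is_interval J" and neJ: "J \<noteq> {}"
    and da: "\<And>x. x \<in> I \<Longrightarrow> (\<alpha> has_vector_derivative a x) (at x)"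
    and dA: "\<And>x. x \<in> I \<Longrightarrow> (a has_vector_derivative A x) (at x)"
    and db: "\<And>x. x \<in> J \<Longrightarrow> (\<beta> has_vector_derivative b x) (at x)"
    and dB: "\<And>x. x \<in> J \<Longrightarrow> (b has_vector_derivative B x) (at x)"
    and ca: "continuous_on I a" and cA: "continuous_on I A"
    and cb: "continuous_on J b" and cB: "continuous_on J B"
    and reg: "\<And>s t. s \<in> I \<Longrightarrow> t \<in> J \<Longrightarrow> cross3 (a s) (b t) \<noteq> 0"
    and flat: "\<And>s t. s \<in> I \<Longrightarrow> t \<in> J \<Longrightarrow> translation_curvature (a s) (A s) (b t) (B t) = 0"
  shows "cylindrical_surface ((\<lambda>(s, t). \<alpha> s + \<beta> t) ` (I \<times> J))"
proof -
  obtain s1 t1 where s1: "s1 \<in> I" and t1: "t1 \<in> J" using neI neJ by auto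
  have anz: "a s \<noteq> 0" if "s \<in> I" for s using reg[OF that t1] by auto
  have bnz: "b t \<noteq> 0" if "t \<in> J" for t using reg[OF s1 that] by auto
  have flat_ab: "(A s \<bullet> cross3 (a s) (b t)) * (B t \<bullet> cross3 (a s) (b t)) = 0"
    if "s \<in> I" "t \<in> J" for s t
    using flat[OF that] reg[OF that] by (simp add: translation_curvature_def)
  have flat_ba: "(B t \<bullet> cross3 (b t) (a s)) * (A s \<bullet> cross3 (b t) (a s)) = 0"
    if "t \<in> J" "s \<in> I" for s t
    using flat_ab[OF that(2,1)] cross_skew[of "b t" "a s"] by (simp add: mult.commute)
  consider "\<forall>s\<in>I. cross3 (a s) (A s) = 0" | "\<forall>t\<in>J. cross3 (b t) (B t) = 0"
    | s0 t0 where "s0 \<in> I" "cross3 (a s0) (A s0) \<noteq> 0" "t0 \<in> J" "cross3 (b t0) (B t0) \<noteq> 0"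
    by blast
  then show ?thesis
  proof cases
    case 1
    then show ?thesis using cylindrical_if_straight_generator[OF oI iI da dA _ anz s1] by blast
  next
    case 2
    have "(\<lambda>(s, t). \<alpha> s + \<beta> t) ` (I \<times> J) = (\<lambda>(t, s). \<beta> t + \<alpha> s) ` (J \<times> I)"
      by (auto simp: image_iff add.commute)
    then show ?thesis using cylindrical_if_straight_generator[OF oJ iJ db dB _ bnz t1] 2 by simp
  next
    case (3 s0 t0)
    define n where "n = cross3 (a s0) (A s0)"
    define m where "m = cross3 (b t0) (B t0)"
    have nb: "n \<bullet> b t = 0" if "t \<in> J" for t
      unfolding n_def
      by (rule binormal_orthogonal_if_flat[OF oI dA ca cA oJ iJ dB cb bnz flat_ab 3(1) 3(3,4) that])
    have ma: "m \<bullet> a s = 0" if "s \<in> I" for s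
      unfolding m_def
      by (rule binormal_orthogonal_if_flat[OF oJ dB cb cB oI iI dA ca anz flat_ba 3(3) 3(1,2) that])
    have "n \<bullet> B t0 = 0"
    proof (rule has_real_derivative_zero_if_locally_zero[where f="\<lambda>t. n \<bullet> b t", OF oJ 3(3)])
    qed (use nb has_real_derivative_inner_const[OF dB[OF 3(3)]] in auto)
    then have "cross3 n m = 0" using nb[OF 3(3)] by (simp add: m_def cross3_cross3)
    then have nm: "n = ((n \<bullet> m) / (m \<bullet> m)) *\<^sub>R m"
      using cross3_eq_0_imp_eq_scaleR 3(4) by (simp add: m_def)
    have na: "n \<bullet> a s = 0" if "s \<in> I" for s
      by (subst nm) (simp add: ma that)
    have "n \<noteq> 0" using 3(2) by (simp add: n_def)
    then show ?thesis
      using cylindrical_if_planar_generators[OF oI iI oJ iJ da db _ na nb reg, of "a s0"]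
        anz[OF 3(1)] na[OF 3(1)] by blast
  qed
qed

section \<open>Constant nonzero curvature\<close>

lemma poly_eq_0_if_infinite_roots:
  fixes p :: "real poly"
  assumes "infinite S" "\<And>x. x \<in> S \<Longrightarrow> poly p x = 0"
  shows "poly p y = 0"
proof -
  have "p = 0"
  proof (rule ccontr)
    assume "p \<noteq> 0"
    then have "finite {x. poly p x = 0}" by (rule poly_roots_finite)
    moreover have "S \<subseteq> {x. poly p x = 0}" using assms(2) by auto
    ultimately show False using assms(1) finite_subset by blast
  qed
  then show ?thesis by simp
qed

lemma positive_polys_proportional:
  fixes p q :: "real poly" and \<kappa> :: real
  assumes p: "\<And>\<tau>. poly p \<tau> > 0" and q: "\<And>\<tau>. poly q \<tau> > 0"
    and S: "infinite S" and sq: "\<And>\<tau>. \<tau> \<in> S \<Longrightarrow> (poly q \<tau>)\<^sup>2 = \<kappa> * (poly p \<tau>)\<^sup>2"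
  shows "poly q \<tau> * poly p 0 = poly p \<tau> * poly q 0"
proof -
  obtain \<tau>0 where "\<tau>0 \<in> S" using S by (metis finite.emptyI ex_in_conv)
  then have "\<kappa> = (poly q \<tau>0)\<^sup>2 / (poly p \<tau>0)\<^sup>2" using sq[of \<tau>0] p[of \<tau>0] by (simp add: field_simps)
  then have \<kappa>: "\<kappa> \<ge> 0" by simp
  have "poly (q - smult (sqrt \<kappa>) p) x = 0" if "x \<in> S" for x
  proof -
    have "sqrt ((poly q x)\<^sup>2) = sqrt \<kappa> * sqrt ((poly p x)\<^sup>2)"
      using sq[OF that] \<kappa> by (simp add: real_sqrt_mult)
    then show ?thesis using p[of x] q[of x] by simp
  qed
  then have "poly (q - smult (sqrt \<kappa>) p) x = 0" for x by (rule poly_eq_0_if_infinite_roots[OF S])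
  then have "poly q x = sqrt \<kappa> * poly p x" for x by simp
  then show ?thesis by (metis mult.commute mult.left_commute)
qed

lemma positive_polys_proportional_if_square_ratio_linear:
  fixes p q :: "real poly" and c0 c1 d0 d1 :: real
  assumes p: "\<And>\<tau>. poly p \<tau> > 0" and q: "\<And>\<tau>. poly q \<tau> > 0" and c0: "c0 \<noteq> 0"
    and eq: "\<And>\<tau>. (poly q \<tau>)\<^sup>2 * (c0 + c1 * \<tau>) = (poly p \<tau>)\<^sup>2 * (d0 + d1 * \<tau>)"
  shows "poly q \<tau> * poly p 0 = poly p \<tau> * poly q 0"
proof (cases "c1 = 0")
  case True
  have "d1 = 0"
  proof (rule ccontr)
    assume "d1 \<noteq> 0"
    then have "(poly q (- d0 / d1))\<^sup>2 * c0 = 0" using eq[of "- d0 / d1"] True by simp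
    then show False using q[of "- d0 / d1"] c0 by simp
  qed
  then show ?thesis
    using positive_polys_proportional[OF p q infinite_UNIV_char_0, of "d0 / c0"] eq True c0
    by (simp add: field_simps)
next
  case False
  define r where "r = - c0 / c1"
  have "(poly p r)\<^sup>2 * (d0 + d1 * r) = 0" using eq[of r] False by (simp add: r_def)
  then have dr: "d0 + d1 * r = 0" using p[of r] by simp
  show ?thesis
  proof (rule positive_polys_proportional[OF p q _, of "UNIV - {r}" "d1 / c1"])
    show "infinite (UNIV - {r})" by (simp add: infinite_UNIV_char_0)
    fix \<tau> :: real assume "\<tau> \<in> UNIV - {r}"
    then have ne: "\<tau> - r \<noteq> 0" by simp
    have "c0 + c1 * \<tau> = c1 * (\<tau> - r)" "d0 + d1 * \<tau> = d1 * (\<tau> - r)"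
      using False dr by (simp_all add: r_def field_simps)
    then have "(poly q \<tau>)\<^sup>2 * c1 * (\<tau> - r) = (poly p \<tau>)\<^sup>2 * d1 * (\<tau> - r)"
      using eq[of \<tau>] by (simp add: mult.assoc)
    then have "(poly q \<tau>)\<^sup>2 * c1 = (poly p \<tau>)\<^sup>2 * d1" using ne by simp
    then show "(poly q \<tau>)\<^sup>2 = d1 / c1 * (poly p \<tau>)\<^sup>2" using ne False by (simp add: field_simps)
  qed
qed

lemma DERIV_proportional:
  fixes f g :: "real \<Rightarrow> real"
  assumes "open J" "t0 \<in> J" "\<And>t. t \<in> J \<Longrightarrow> f t * g t0 = f t0 * g t"
    and "(f has_real_derivative f') (at t0)" "(g has_real_derivative g') (at t0)"
  shows "f' * g t0 = f t0 * g'"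
proof -
  have "((\<lambda>t. f t * g t0) has_real_derivative f' * g t0) (at t0)"
    by (rule DERIV_cmult_right[OF assms(4)])
  then have "((\<lambda>t. f t0 * g t) has_real_derivative f' * g t0) (at t0)"
    by (rule has_field_derivative_transform_within_open[OF _ assms(1,2)]) (use assms(3) in simp)
  moreover have "((\<lambda>t. f t0 * g t) has_real_derivative f t0 * g') (at t0)"
    by (rule DERIV_cmult[OF assms(5)])
  ultimately show ?thesis by (rule DERIV_unique)
qed

lemma parallel_if_pencil_derivative:
  fixes b1 b2 b3 B1 B2 B3 :: real
  assumes b3: "b3 \<noteq> 0" and b12: "b1 \<noteq> 0 \<or> b2 \<noteq> 0"
    and pencil: "\<And>\<tau>. ((1 + \<tau>\<^sup>2) * (b1*B1 + b2*B2 + b3*B3) - (B1 + \<tau>*B2) * (b1 + \<tau>*b2))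
      * (b2\<^sup>2 + b3\<^sup>2) = ((1 + \<tau>\<^sup>2) * (b1\<^sup>2 + b2\<^sup>2 + b3\<^sup>2) - (b1 + \<tau>*b2)\<^sup>2) * (b2*B2 + b3*B3)"
  shows "\<exists>L. B1 = L * b1 \<and> B2 = L * b2 \<and> B3 = L * b3"
proof -
  txt \<open>Split \<open>B = L b + C\<close> with \<open>b\<^sub>2 C\<^sub>2 + b\<^sub>3 C\<^sub>3 = 0\<close>; the identity then collapses to
    \<open>(1 + \<tau>\<^sup>2)(b \<bullet> C) = (C\<^sub>1 + \<tau> C\<^sub>2)(b\<^sub>1 + \<tau> b\<^sub>2)\<close>, and \<open>\<tau> = \<plusminus>1\<close> force \<open>C = 0\<close>.\<close>
  define D where "D = b2\<^sup>2 + b3\<^sup>2"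
  have D: "D > 0" using b3 by (simp add: D_def add_nonneg_pos)
  define L where "L = (b2*B2 + b3*B3) / D"
  define C1 C2 C3 where "C1 = B1 - L*b1" and "C2 = B2 - L*b2" and "C3 = B3 - L*b3"
  have LD: "b2*B2 + b3*B3 = L * D" using D by (simp add: L_def)
  then have h0: "b2 * C2 + b3 * C3 = 0"
    by (simp add: C2_def C3_def D_def algebra_simps power2_eq_square)
  have reduced: "(1 + \<tau>\<^sup>2) * (b1*C1 + b2*C2 + b3*C3) - (C1 + \<tau>*C2) * (b1 + \<tau>*b2) = 0" for \<tau>
  proof -
    have "((1 + \<tau>\<^sup>2) * (b1*C1 + b2*C2 + b3*C3) - (C1 + \<tau>*C2) * (b1 + \<tau>*b2)) * D
      = ((1 + \<tau>\<^sup>2) * (b1*B1 + b2*B2 + b3*B3) - (B1 + \<tau>*B2) * (b1 + \<tau>*b2)) * (b2\<^sup>2 + b3\<^sup>2)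
        - ((1 + \<tau>\<^sup>2) * (b1\<^sup>2 + b2\<^sup>2 + b3\<^sup>2) - (b1 + \<tau>*b2)\<^sup>2) * (L * D)"
      unfolding C1_def C2_def C3_def D_def by algebra
    then have "((1 + \<tau>\<^sup>2) * (b1*C1 + b2*C2 + b3*C3) - (C1 + \<tau>*C2) * (b1 + \<tau>*b2)) * D = 0"
      using pencil[of \<tau>] LD by simp
    then show "(1 + \<tau>\<^sup>2) * (b1*C1 + b2*C2 + b3*C3) - (C1 + \<tau>*C2) * (b1 + \<tau>*b2) = 0"
      using D by simp
  qed
  have s1: "b1*C1 + b2*C2 + 2*b3*C3 - b1*C2 - b2*C1 = 0"
    using reduced[of 1] by (simp add: algebra_simps)
  have s2: "b1*C1 + b2*C2 + 2*b3*C3 + b1*C2 + b2*C1 = 0"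
    using reduced[of "-1"] by (simp add: algebra_simps)
  have k: "b1 * C1 = b2 * C2" using s1 s2 h0 by linarith
  have x: "b1 * C2 + b2 * C1 = 0" using s1 s2 by linarith
  have "b1\<^sup>2 * (b2 * C2) + b2\<^sup>2 * (b1 * C1) = b1 * b2 * (b1 * C2 + b2 * C1)"
    by (simp add: algebra_simps power2_eq_square)
  then have "b1\<^sup>2 * (b2 * C2) + b2\<^sup>2 * (b2 * C2) = 0" using x k by simp
  then have "(b1\<^sup>2 + b2\<^sup>2) * (b2 * C2) = 0" by (simp add: algebra_simps)
  moreover have "b1\<^sup>2 + b2\<^sup>2 > 0" using b12 by (auto simp: add_pos_nonneg add_nonneg_pos)
  ultimately have b2C2: "b2 * C2 = 0" by (metis mult_eq_0_iff less_irrefl)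
  then have "b1 * C1 = 0" using k by simp
  moreover have "C3 = 0" using h0 b2C2 b3 by simp
  moreover have "C1 = 0 \<and> C2 = 0"
    using b12 b2C2 x \<open>b1 * C1 = 0\<close> by (cases "b1 = 0"; cases "b2 = 0") auto
  ultimately show ?thesis unfolding C1_def C2_def C3_def by (intro exI[of _ L]) simp
qed

text \<open>\<open>|(e\<^sub>1 + \<tau> e\<^sub>2) \<times> w|\<^sup>2\<close> for an orthonormal pair \<open>e\<^sub>1, e\<^sub>2\<close>, as a polynomial in \<open>\<tau>\<close>.\<close>

definition slope_quadratic :: "real^3 \<Rightarrow> real^3 \<Rightarrow> real^3 \<Rightarrow> real poly" where
  "slope_quadratic e1 e2 w = [: w \<bullet> w - (w \<bullet> e1)\<^sup>2, -2 * (w \<bullet> e1) * (w \<bullet> e2), w \<bullet> w - (w \<bullet> e2)\<^sup>2 :]"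

lemma poly_slope_quadratic:
  "poly (slope_quadratic e1 e2 w) \<tau> = (1 + \<tau>\<^sup>2) * (w \<bullet> w) - (w \<bullet> e1 + \<tau> * (w \<bullet> e2))\<^sup>2"
  by (simp add: slope_quadratic_def algebra_simps power2_eq_square)

lemma slope_coordinates:
  fixes n e a w :: "real^3"
  assumes n: "n \<bullet> n = 1" and e: "e \<bullet> e = 1" "e \<bullet> n = 0" and na: "n \<bullet> a = 0" and x: "e \<bullet> a \<noteq> 0"
  defines "\<tau> \<equiv> (cross3 n e \<bullet> a) / (e \<bullet> a)"
  shows "(a \<bullet> a) * (w \<bullet> w) - (a \<bullet> w)\<^sup>2 = (e \<bullet> a)\<^sup>2 * poly (slope_quadratic e (cross3 n e) w) \<tau>"
    and "a \<bullet> w = (e \<bullet> a) * (w \<bullet> e + \<tau> * (w \<bullet> cross3 n e))"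
proof -
  have ae: "a \<bullet> e = e \<bullet> a" "a \<bullet> cross3 n e = \<tau> * (e \<bullet> a)" "a \<bullet> n = 0"
    using x na by (simp_all add: \<tau>_def inner_commute)
  have aw: "a \<bullet> w = (e \<bullet> a) * (w \<bullet> e + \<tau> * (w \<bullet> cross3 n e))" for w
    using frame_parseval[OF n e, of a w] ae by (simp add: algebra_simps)
  then show "a \<bullet> w = (e \<bullet> a) * (w \<bullet> e + \<tau> * (w \<bullet> cross3 n e))" .
  show "(a \<bullet> a) * (w \<bullet> w) - (a \<bullet> w)\<^sup>2 = (e \<bullet> a)\<^sup>2 * poly (slope_quadratic e (cross3 n e) w) \<tau>"
    unfolding aw[of a] aw[of w] poly_slope_quadratic using ae
    by (simp add: power2_eq_square algebra_simps inner_commute)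
qed

lemma slope_quadratic_pos:
  fixes n e w :: "real^3"
  assumes n: "n \<bullet> n = 1" and e: "e \<bullet> e = 1" "e \<bullet> n = 0" and nw: "n \<bullet> w \<noteq> 0"
  shows "poly (slope_quadratic e (cross3 n e) w) \<tau> > 0"
proof -
  have "w \<bullet> w = (w \<bullet> e)\<^sup>2 + (w \<bullet> cross3 n e)\<^sup>2 + (w \<bullet> n)\<^sup>2"
    using frame_parseval[OF n e, of w w] by (simp add: power2_eq_square)
  then have "poly (slope_quadratic e (cross3 n e) w) \<tau>
      = (w \<bullet> cross3 n e - \<tau> * (w \<bullet> e))\<^sup>2 + (1 + \<tau>\<^sup>2) * (w \<bullet> n)\<^sup>2"
    unfolding poly_slope_quadratic by (simp add: power2_eq_square algebra_simps)
  moreover have "(w \<bullet> n)\<^sup>2 > 0" using nw by (simp add: inner_commute)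
  moreover have "1 + \<tau>\<^sup>2 > 0" by (simp add: add_pos_nonneg)
  ultimately show ?thesis by (simp add: add_nonneg_pos)
qed

lemma derivative_parallel_if_on_line:
  fixes b B :: "real \<Rightarrow> real^3" and n :: "real^3"
  assumes oJ: "open J" and t1: "t1 \<in> J" and dB: "\<And>t. t \<in> J \<Longrightarrow> (b has_vector_derivative B t) (at t)"
    and n: "n \<noteq> 0" and line: "\<And>t. t \<in> J \<Longrightarrow> cross3 (b t) n = 0"
  shows "cross3 (b t1) (B t1) = 0"
proof -
  define \<phi> where "\<phi> t = (n \<bullet> b t) / (n \<bullet> n)" for t
  have bn: "b t = \<phi> t *\<^sub>R n" if "t \<in> J" for t
    using cross3_eq_0_imp_eq_scaleR[OF line[OF that] n] by (simp add: \<phi>_def inner_commute)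
  have "(\<phi> has_real_derivative (n \<bullet> B t1) / (n \<bullet> n)) (at t1)"
    unfolding \<phi>_def by (intro DERIV_cdivide has_real_derivative_inner_const dB t1)
  from has_vector_derivative_scaleR[OF this has_vector_derivative_const[of n]]
  have "((\<lambda>t. \<phi> t *\<^sub>R n) has_vector_derivative ((n \<bullet> B t1) / (n \<bullet> n)) *\<^sub>R n) (at t1)" by simp
  moreover have "((\<lambda>t. \<phi> t *\<^sub>R n) has_vector_derivative B t1) (at t1)"
    by (rule has_vector_derivative_transform_within_open[OF dB[OF t1] oJ t1]) (simp add: bn)
  ultimately have Bn: "B t1 = ((n \<bullet> B t1) / (n \<bullet> n)) *\<^sub>R n"
    by (rule vector_derivative_unique_at[symmetric])
  show ?thesis
    by (subst bn[OF t1], subst Bn) (simp add: cross_mult_left cross_mult_right)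
qed

lemma constant_curvature_planar_identity:
  fixes a A b B n :: "real^3" and c :: real
  assumes reg: "cross3 a b \<noteq> 0" and n: "n \<bullet> n = 1" "n \<bullet> a = 0" "n \<bullet> A = 0"
    and c: "c \<noteq> 0" and K: "translation_curvature a A b B = c"
  shows "c * ((a \<bullet> a) * (b \<bullet> b) - (a \<bullet> b)\<^sup>2)\<^sup>2 = (n \<bullet> cross3 A a) * (n \<bullet> b) * (a \<bullet> cross3 b B)"
    and "n \<bullet> cross3 A a \<noteq> 0" "n \<bullet> b \<noteq> 0" "a \<bullet> cross3 b B \<noteq> 0"
proof -
  define Q where "Q = (a \<bullet> a) * (b \<bullet> b) - (a \<bullet> b)\<^sup>2"
  have "n \<noteq> 0" using n by auto
  have "cross3 (cross3 A a) n = 0"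
    using cross_skew[of "cross3 A a" n] n by (simp add: cross3_cross3)
  then have "cross3 A a = (n \<bullet> cross3 A a) *\<^sub>R n"
    using cross3_eq_0_imp_eq_scaleR[of "cross3 A a" n] \<open>n \<noteq> 0\<close> n by (simp add: inner_commute)
  then have "A \<bullet> cross3 a b = (n \<bullet> cross3 A a) * (n \<bullet> b)"
    by (metis inner_cross3_cyclic inner_commute inner_scaleR_right)
  moreover have "B \<bullet> cross3 a b = a \<bullet> cross3 b B" by (rule inner_cross3_cyclic)
  moreover have "(norm (cross3 a b))\<^sup>2 = Q"
    by (simp add: Q_def power2_norm_eq_inner inner_cross3_cross3)
  then have "norm (cross3 a b) ^ 4 = Q\<^sup>2" using power_even_eq[of "norm (cross3 a b)" 2] by simp
  moreover have "Q \<noteq> 0" using reg by (simp add: Q_def flip: inner_cross3_cross3)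
  ultimately have E: "c * Q\<^sup>2 = (n \<bullet> cross3 A a) * (n \<bullet> b) * (a \<bullet> cross3 b B)"
    using K by (simp add: translation_curvature_def field_simps)
  then show "c * ((a \<bullet> a) * (b \<bullet> b) - (a \<bullet> b)\<^sup>2)\<^sup>2 = (n \<bullet> cross3 A a) * (n \<bullet> b) * (a \<bullet> cross3 b B)"
    unfolding Q_def .
  have "c * Q\<^sup>2 \<noteq> 0" using c \<open>Q \<noteq> 0\<close> by simp
  then show "n \<bullet> cross3 A a \<noteq> 0" "n \<bullet> b \<noteq> 0" "a \<bullet> cross3 b B \<noteq> 0" using E by auto
qed

lemma infinite_slope_values:
  fixes a A :: "real \<Rightarrow> real^3" and e1 e2 :: "real^3"
  assumes oI: "open I" and s1: "s1 \<in> I"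
    and dA: "\<And>x. x \<in> I \<Longrightarrow> (a has_vector_derivative A x) (at x)"
    and ca: "continuous_on I a"
    and x1: "e1 \<bullet> a s1 \<noteq> 0" and y1: "e2 \<bullet> a s1 = 0" and A2: "e2 \<bullet> A s1 \<noteq> 0"
  obtains U where "U \<subseteq> I" "\<And>s. s \<in> U \<Longrightarrow> e1 \<bullet> a s \<noteq> 0"
    "infinite ((\<lambda>s. (e2 \<bullet> a s) / (e1 \<bullet> a s)) ` U)"
proof -
  have "continuous_on I (\<lambda>s. e1 \<bullet> a s)" by (intro continuous_intros ca)
  then obtain d where d: "d > 0" "ball s1 d \<subseteq> I" "\<And>s. s \<in> ball s1 d \<Longrightarrow> e1 \<bullet> a s \<noteq> 0"
    using continuous_on_avoid_ball[of I "\<lambda>s. e1 \<bullet> a s" s1 0] oI s1 x1 by blast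
  define \<tau> where "\<tau> s = (e2 \<bullet> a s) / (e1 \<bullet> a s)" for s
  have d\<tau>: "(\<tau> has_real_derivative
      ((e2 \<bullet> A s) * (e1 \<bullet> a s) - (e2 \<bullet> a s) * (e1 \<bullet> A s)) / ((e1 \<bullet> a s) * (e1 \<bullet> a s))) (at s)"
    if "s \<in> ball s1 d" for s
    unfolding \<tau>_def
    by (rule DERIV_divide[OF has_real_derivative_inner_const[OF dA]
          has_real_derivative_inner_const[OF dA]])
       (use that d in auto)
  have "continuous_on (ball s1 d) \<tau>"
    by (rule continuous_at_imp_continuous_on) (use d\<tau> DERIV_isCont in blast)
  moreover have s1d: "s1 \<in> ball s1 d" using d(1) by simp
  moreover have
    "((e2 \<bullet> A s1) * (e1 \<bullet> a s1) - (e2 \<bullet> a s1) * (e1 \<bullet> A s1)) / ((e1 \<bullet> a s1) * (e1 \<bullet> a s1)) \<noteq> 0"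
    using x1 y1 A2 by simp
  ultimately have "\<tau> s1 \<in> interior (\<tau> ` ball s1 d)"
    using interior_image_if_has_real_derivative_nonzero[OF open_ball _ _ d\<tau>[OF s1d]] by blast
  then have "infinite (\<tau> ` ball s1 d)" using empty_interior_finite by blast
  then show ?thesis using that[of "ball s1 d"] d by (simp add: \<tau>_def)
qed

lemma constant_curvature_slope_identity:
  fixes n e a b B :: "real^3" and c W :: real
  assumes n: "n \<bullet> n = 1" and e: "e \<bullet> e = 1" "e \<bullet> n = 0" and na: "n \<bullet> a = 0" and x: "e \<bullet> a \<noteq> 0"
    and K: "c * ((a \<bullet> a) * (b \<bullet> b) - (a \<bullet> b)\<^sup>2)\<^sup>2 = W * (n \<bullet> b) * (a \<bullet> cross3 b B)"
  defines "\<tau> \<equiv> (cross3 n e \<bullet> a) / (e \<bullet> a)"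
  shows "c * (e \<bullet> a) ^ 4 * (poly (slope_quadratic e (cross3 n e) b) \<tau>)\<^sup>2
    = W * (e \<bullet> a) * ((n \<bullet> b) * (cross3 b B \<bullet> e) + (n \<bullet> b) * (cross3 b B \<bullet> cross3 n e) * \<tau>)"
proof -
  note sc = slope_coordinates[OF n e na x, folded \<tau>_def]
  have "c * ((e \<bullet> a)\<^sup>2 * poly (slope_quadratic e (cross3 n e) b) \<tau>)\<^sup>2
      = W * (n \<bullet> b) * ((e \<bullet> a) * (cross3 b B \<bullet> e + \<tau> * (cross3 b B \<bullet> cross3 n e)))"
    using K unfolding sc(1)[of b] sc(2)[of "cross3 b B"] .
  then show ?thesis by (simp add: power_mult_distrib algebra_simps flip: power_mult)
qed

lemma slope_quadratics_proportional:
  fixes a A b B :: "real \<Rightarrow> real^3" and n e :: "real^3" and c :: real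
  assumes oI: "open I" and s1: "s1 \<in> I"
    and dA: "\<And>x. x \<in> I \<Longrightarrow> (a has_vector_derivative A x) (at x)" and ca: "continuous_on I a"
    and n: "n \<bullet> n = 1" and e: "e \<bullet> e = 1" "e \<bullet> n = 0"
    and ea: "e \<bullet> a s1 \<noteq> 0" "cross3 n e \<bullet> a s1 = 0"
    and na: "\<And>s. s \<in> I \<Longrightarrow> n \<bullet> a s = 0" and c: "c \<noteq> 0"
    and K: "\<And>s t. s \<in> I \<Longrightarrow> t \<in> J \<Longrightarrow> c * ((a s \<bullet> a s) * (b t \<bullet> b t) - (a s \<bullet> b t)\<^sup>2)\<^sup>2
              = (n \<bullet> cross3 (A s) (a s)) * (n \<bullet> b t) * (a s \<bullet> cross3 (b t) (B t))"
    and W1: "n \<bullet> cross3 (A s1) (a s1) \<noteq> 0" and nb: "\<And>t. t \<in> J \<Longrightarrow> n \<bullet> b t \<noteq> 0"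
    and t0: "t0 \<in> J" "a s1 \<bullet> cross3 (b t0) (B t0) \<noteq> 0" and t: "t \<in> J"
  shows "poly (slope_quadratic e (cross3 n e) (b t)) \<tau> * poly (slope_quadratic e (cross3 n e) (b t0)) 0
       = poly (slope_quadratic e (cross3 n e) (b t0)) \<tau> * poly (slope_quadratic e (cross3 n e) (b t)) 0"
proof -
  define G where "G t = slope_quadratic e (cross3 n e) (b t)" for t
  define F1 where "F1 t = (n \<bullet> b t) * (cross3 (b t) (B t) \<bullet> e)" for t
  define F2 where "F2 t = (n \<bullet> b t) * (cross3 (b t) (B t) \<bullet> cross3 n e)" for t
  define slope where "slope s = (cross3 n e \<bullet> a s) / (e \<bullet> a s)" for s
  define x where "x = e \<bullet> a s1"
  have a1: "a s1 = x *\<^sub>R e"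
    using frame_expansion[OF n e, of "a s1"] ea(2) na[OF s1] by (simp add: x_def inner_commute)
  have "n \<bullet> cross3 (A s1) (a s1) = - x * (cross3 n e \<bullet> A s1)"
    unfolding a1 using inner_cross3_cyclic[of n "A s1" e] cross_skew[of e n]
    by (simp add: cross_mult_right inner_commute)
  then obtain U where U: "U \<subseteq> I" "\<And>s. s \<in> U \<Longrightarrow> e \<bullet> a s \<noteq> 0" "infinite (slope ` U)"
    using infinite_slope_values[OF oI s1 dA ca ea] W1 unfolding slope_def by auto
  have key: "c * (e \<bullet> a s) ^ 4 * (poly (G t') (slope s))\<^sup>2
      = (n \<bullet> cross3 (A s) (a s)) * (e \<bullet> a s) * (F1 t' + F2 t' * slope s)"
    if "s \<in> U" "t' \<in> J" for s t'
  proof -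
    have "s \<in> I" using that U by auto
    from constant_curvature_slope_identity[OF n e na[OF this] U(2)[OF that(1)] K[OF this that(2)]]
    show ?thesis by (simp add: G_def F1_def F2_def slope_def algebra_simps)
  qed
  have "poly ((G t)\<^sup>2 * [: F1 t0, F2 t0 :] - (G t0)\<^sup>2 * [: F1 t, F2 t :]) \<sigma> = 0"
    if "\<sigma> \<in> slope ` U" for \<sigma>
  proof -
    obtain s where s: "s \<in> U" and \<sigma>: "\<sigma> = slope s" using \<open>\<sigma> \<in> slope ` U\<close> by blast
    have "c * (e \<bullet> a s) ^ 4 * poly ((G t)\<^sup>2 * [: F1 t0, F2 t0 :] - (G t0)\<^sup>2 * [: F1 t, F2 t :]) \<sigma>
      = c * (e \<bullet> a s) ^ 4 * (poly (G t) \<sigma>)\<^sup>2 * (F1 t0 + F2 t0 * \<sigma>)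
        - c * (e \<bullet> a s) ^ 4 * (poly (G t0) \<sigma>)\<^sup>2 * (F1 t + F2 t * \<sigma>)"
      by (simp add: poly_power algebra_simps)
    also have "\<dots> = 0" unfolding \<sigma> key[OF s t] key[OF s t0(1)] by (simp add: algebra_simps)
    finally show ?thesis using c U(2)[OF s] by simp
  qed
  from poly_eq_0_if_infinite_roots[OF U(3) this]
  have "(poly (G t) \<sigma>)\<^sup>2 * (F1 t0 + F2 t0 * \<sigma>) = (poly (G t0) \<sigma>)\<^sup>2 * (F1 t + F2 t * \<sigma>)" for \<sigma>
    by (simp add: poly_power algebra_simps)
  moreover have "F1 t0 \<noteq> 0"
    using t0(2) nb[OF t0(1)] unfolding a1 by (simp add: F1_def x_def inner_commute)
  ultimately show ?thesis
    using positive_polys_proportional_if_square_ratio_linear slope_quadratic_pos[OF n e nb] t0(1) t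
    unfolding G_def by blast
qed

lemma parallel_if_slope_quadratics_proportional:
  fixes b B :: "real \<Rightarrow> real^3" and n e :: "real^3"
  assumes n: "n \<bullet> n = 1" and e: "e \<bullet> e = 1" "e \<bullet> n = 0"
    and oJ: "open J" and t0: "t0 \<in> J" and dB: "\<And>t. t \<in> J \<Longrightarrow> (b has_vector_derivative B t) (at t)"
    and proportional: "\<And>t \<tau>. t \<in> J \<Longrightarrow>
      poly (slope_quadratic e (cross3 n e) (b t)) \<tau> * poly (slope_quadratic e (cross3 n e) (b t0)) 0
      = poly (slope_quadratic e (cross3 n e) (b t0)) \<tau> * poly (slope_quadratic e (cross3 n e) (b t)) 0"
    and nb: "n \<bullet> b t0 \<noteq> 0" and bn: "cross3 (b t0) n \<noteq> 0"
  shows "cross3 (b t0) (B t0) = 0"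
proof -
  define e2 where "e2 = cross3 n e"
  define G where "G \<tau> t = poly (slope_quadratic e e2 (b t)) \<tau>" for \<tau> t
  define b1 b2 b3 where "b1 = b t0 \<bullet> e" and "b2 = b t0 \<bullet> e2" and "b3 = b t0 \<bullet> n"
  define B1 B2 B3 where "B1 = B t0 \<bullet> e" and "B2 = B t0 \<bullet> e2" and "B3 = B t0 \<bullet> n"
  have bb: "b t0 \<bullet> b t0 = b1\<^sup>2 + b2\<^sup>2 + b3\<^sup>2" and bB: "b t0 \<bullet> B t0 = b1*B1 + b2*B2 + b3*B3"
    using frame_parseval[OF n e, of "b t0" "b t0"] frame_parseval[OF n e, of "b t0" "B t0"]
    by (simp_all add: b1_def b2_def b3_def B1_def B2_def B3_def e2_def power2_eq_square)
  define P where "P \<tau> = (1 + \<tau>\<^sup>2) * (b1*B1 + b2*B2 + b3*B3) - (B1 + \<tau>*B2) * (b1 + \<tau>*b2)" for \<tau>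
  define Q where "Q \<tau> = (1 + \<tau>\<^sup>2) * (b1\<^sup>2 + b2\<^sup>2 + b3\<^sup>2) - (b1 + \<tau>*b2)\<^sup>2" for \<tau>
  have dG: "(G \<tau> has_real_derivative 2 * P \<tau>) (at t0)" for \<tau>
  proof -
    have d1: "((\<lambda>t. b t \<bullet> b t) has_real_derivative 2 * (b t0 \<bullet> B t0)) (at t0)"
      using has_real_derivative_inner[OF dB[OF t0] dB[OF t0]] by (simp add: inner_commute)
    have "((\<lambda>t. b t \<bullet> e) has_real_derivative B1) (at t0)"
      "((\<lambda>t. b t \<bullet> e2) has_real_derivative B2) (at t0)"
      using has_real_derivative_inner[OF dB[OF t0] has_vector_derivative_const]
      by (simp_all add: B1_def B2_def)
    then have "((\<lambda>t. b t \<bullet> e + \<tau> * (b t \<bullet> e2)) has_real_derivative B1 + \<tau> * B2) (at t0)"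
      by (intro DERIV_add DERIV_cmult)
    from DERIV_diff[OF DERIV_cmult[OF d1, of "1 + \<tau>\<^sup>2"] DERIV_power[OF this, of 2]]
    show ?thesis unfolding G_def poly_slope_quadratic
      by (rule DERIV_cong) (simp add: P_def bB b1_def b2_def algebra_simps)
  qed
  have "G \<tau> t * G 0 t0 = G \<tau> t0 * G 0 t" if "t \<in> J" for \<tau> t
    using proportional[OF that] by (simp add: G_def e2_def)
  then have "2 * P \<tau> * G 0 t0 = G \<tau> t0 * (2 * P 0)" for \<tau>
    using DERIV_proportional[OF oJ t0 _ dG dG] by blast
  moreover have "G 0 t0 = b2\<^sup>2 + b3\<^sup>2" "P 0 = b2*B2 + b3*B3" "G \<tau> t0 = Q \<tau>" for \<tau>
    by (simp_all add: G_def P_def Q_def poly_slope_quadratic bb flip: b1_def b2_def)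
  ultimately have "P \<tau> * (b2\<^sup>2 + b3\<^sup>2) = Q \<tau> * (b2*B2 + b3*B3)" for \<tau>
    by (metis mult.assoc mult.left_commute mult_cancel_left zero_neq_numeral)
  note pencil = this[unfolded P_def Q_def]
  have b: "b t0 = b1 *\<^sub>R e + b2 *\<^sub>R e2 + b3 *\<^sub>R n"
    unfolding b1_def b2_def b3_def e2_def by (rule frame_expansion[OF n e])
  have B: "B t0 = B1 *\<^sub>R e + B2 *\<^sub>R e2 + B3 *\<^sub>R n"
    unfolding B1_def B2_def B3_def e2_def by (rule frame_expansion[OF n e])
  have "b3 \<noteq> 0" using nb by (simp add: b3_def inner_commute)
  moreover have "b1 \<noteq> 0 \<or> b2 \<noteq> 0"
  proof (rule ccontr)
    assume "\<not> (b1 \<noteq> 0 \<or> b2 \<noteq> 0)"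
    then have "b t0 = b3 *\<^sub>R n" by (simp add: b)
    then show False using bn by (simp add: cross_mult_left)
  qed
  ultimately obtain L where "B1 = L * b1" "B2 = L * b2" "B3 = L * b3"
    using parallel_if_pencil_derivative[OF _ _ pencil] by blast
  then have "B t0 = L *\<^sub>R b t0" unfolding B b by (simp add: scaleR_add_right)
  then show ?thesis by (simp add: cross_mult_right)
qed

lemma no_constant_curvature_if_normal_to_generator:
  fixes a A b B :: "real \<Rightarrow> real^3" and n :: "real^3" and c :: real
  assumes oI: "open I" and oJ: "open J" and neI: "I \<noteq> {}" and neJ: "J \<noteq> {}"
    and dA: "\<And>x. x \<in> I \<Longrightarrow> (a has_vector_derivative A x) (at x)"
    and dB: "\<And>x. x \<in> J \<Longrightarrow> (b has_vector_derivative B x) (at x)"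
    and ca: "continuous_on I a"
    and n: "n \<bullet> n = 1" and na: "\<And>s. s \<in> I \<Longrightarrow> n \<bullet> a s = 0" and nA: "\<And>s. s \<in> I \<Longrightarrow> n \<bullet> A s = 0"
    and reg: "\<And>s t. s \<in> I \<Longrightarrow> t \<in> J \<Longrightarrow> cross3 (a s) (b t) \<noteq> 0"
    and c: "c \<noteq> 0"
    and K: "\<And>s t. s \<in> I \<Longrightarrow> t \<in> J \<Longrightarrow> translation_curvature (a s) (A s) (b t) (B t) = c"
  shows False
proof -
  obtain s1 t1 where s1: "s1 \<in> I" and t1: "t1 \<in> J" using neI neJ by auto
  have E: "c * ((a s \<bullet> a s) * (b t \<bullet> b t) - (a s \<bullet> b t)\<^sup>2)\<^sup>2
           = (n \<bullet> cross3 (A s) (a s)) * (n \<bullet> b t) * (a s \<bullet> cross3 (b t) (B t))"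
    and W: "n \<bullet> cross3 (A s) (a s) \<noteq> 0" and nb: "n \<bullet> b t \<noteq> 0"
    and m: "a s \<bullet> cross3 (b t) (B t) \<noteq> 0" if "s \<in> I" "t \<in> J" for s t
    using constant_curvature_planar_identity[OF reg[OF that] n na[OF that(1)] nA[OF that(1)] c
        K[OF that]]
    by auto
  show False
  proof (cases "\<forall>t\<in>J. cross3 (b t) n = 0")
    case True
    moreover have "n \<noteq> 0" using n by auto
    ultimately have "cross3 (b t1) (B t1) = 0"
      using derivative_parallel_if_on_line[OF oJ t1 dB] by blast
    then show False using m[OF s1 t1] by simp
  next
    case False
    then obtain t0 where t0: "t0 \<in> J" "cross3 (b t0) n \<noteq> 0" by blast
    define e where "e = a s1 /\<^sub>R norm (a s1)"
    have "a s1 \<noteq> 0" using reg[OF s1 t0(1)] by auto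
    then have e: "e \<bullet> e = 1" "e \<bullet> n = 0" "e \<bullet> a s1 \<noteq> 0" "cross3 n e \<bullet> a s1 = 0"
      using na[OF s1]
      by (auto simp: e_def dot_square_norm power2_eq_square inner_commute cross_mult_right
          dot_cross_self)
    have proportional:
      "poly (slope_quadratic e (cross3 n e) (b t)) \<tau> * poly (slope_quadratic e (cross3 n e) (b t0)) 0
       = poly (slope_quadratic e (cross3 n e) (b t0)) \<tau> * poly (slope_quadratic e (cross3 n e) (b t)) 0"
      if "t \<in> J" for t \<tau>
      using slope_quadratics_proportional[where a=a and b=b and B=B and J=J,
          OF oI s1 dA ca n e(1,2) e(3,4) na c E W[OF s1 t0(1)] _ t0(1) m[OF s1 t0(1)] that] nb s1
      by blast
    have "cross3 (b t0) (B t0) = 0"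
      by (rule parallel_if_slope_quadratics_proportional[OF n e(1,2) oJ t0(1) dB proportional
            nb[OF s1 t0(1)] t0(2)])
    then show False using m[OF s1 t0(1)] by simp
  qed
qed

lemma cross3_ne_0_if_regular_param:
  fixes \<alpha> \<beta> a b :: "real \<Rightarrow> real^3"
  assumes "regular_param (\<lambda>s t. \<alpha> s + \<beta> t) I J" "s \<in> I" "t \<in> J"
    and "(\<alpha> has_vector_derivative a s) (at s)" "(\<beta> has_vector_derivative b t) (at t)"
  shows "cross3 (a s) (b t) \<noteq> 0"
  using assms Xs_translation_surface[OF assms(4)] Xt_translation_surface[OF assms(5)]
  unfolding regular_param_def by metis

lemma no_constant_curvature_if_planar_generator:
  fixes \<alpha> \<beta> a A b B :: "real \<Rightarrow> real^3" and c :: real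
  assumes oI: "open I" and neI: "I \<noteq> {}" and oJ: "open J" and neJ: "J \<noteq> {}"
    and da: "\<And>x. x \<in> I \<Longrightarrow> (\<alpha> has_vector_derivative a x) (at x)"
    and dA: "\<And>x. x \<in> I \<Longrightarrow> (a has_vector_derivative A x) (at x)"
    and db: "\<And>x. x \<in> J \<Longrightarrow> (\<beta> has_vector_derivative b x) (at x)"
    and dB: "\<And>x. x \<in> J \<Longrightarrow> (b has_vector_derivative B x) (at x)"
    and ca: "continuous_on I a" and cb: "continuous_on J b"
    and reg: "\<And>s t. s \<in> I \<Longrightarrow> t \<in> J \<Longrightarrow> cross3 (a s) (b t) \<noteq> 0"
    and planar: "planar_curve I \<alpha> \<or> planar_curve J \<beta>" and c: "c \<noteq> 0"
    and K: "\<And>s t. s \<in> I \<Longrightarrow> t \<in> J \<Longrightarrow> translation_curvature (a s) (A s) (b t) (B t) = c"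
  shows False
  using planar
proof
  assume "planar_curve I \<alpha>"
  then obtain n where n: "n \<bullet> n = 1" "\<And>x. x \<in> I \<Longrightarrow> n \<bullet> a x = 0" "\<And>x. x \<in> I \<Longrightarrow> n \<bullet> A x = 0"
    using planar_curve_unit_normal[OF oI da dA] by metis
  show False
    by (rule no_constant_curvature_if_normal_to_generator[OF oI oJ neI neJ dA dB ca n reg c K])
next
  assume "planar_curve J \<beta>"
  then obtain n where n: "n \<bullet> n = 1" "\<And>x. x \<in> J \<Longrightarrow> n \<bullet> b x = 0" "\<And>x. x \<in> J \<Longrightarrow> n \<bullet> B x = 0"
    using planar_curve_unit_normal[OF oJ db dB] by metis
  show False
  proof (rule no_constant_curvature_if_normal_to_generator[OF oJ oI neJ neI dB dA cb n _ c])
    show "cross3 (b t) (a s) \<noteq> 0" if "t \<in> J" "s \<in> I" for t s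
      using reg[OF that(2,1)] cross_skew[of "b t" "a s"] by auto
    show "translation_curvature (b t) (B t) (a s) (A s) = c" if "t \<in> J" "s \<in> I" for t s
      using K[OF that(2,1)] by (simp add: translation_curvature_commute)
  qed
qed

theorem theorem1:
  fixes \<alpha> \<beta> :: "real \<Rightarrow> real^3" and I J :: "real set"
  assumes I: "open I" "is_interval I" "I \<noteq> {}"
      and J: "open J" "is_interval J" "J \<noteq> {}"
      and sa: "smooth_curve_on I \<alpha>" and sb: "smooth_curve_on J \<beta>"
      and reg: "regular_param (\<lambda>s t. \<alpha> s + \<beta> t) I J"
  shows "((\<forall>s\<in>I. \<forall>t\<in>J. gauss_curvature (\<lambda>s t. \<alpha> s + \<beta> t) s t = 0)
            \<longrightarrow> cylindrical_surface ((\<lambda>(s, t). \<alpha> s + \<beta> t) ` (I \<times> J)))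
       \<and> ((planar_curve I \<alpha> \<or> planar_curve J \<beta>)
            \<longrightarrow> \<not> (\<exists>c. c \<noteq> 0 \<and> (\<forall>s\<in>I. \<forall>t\<in>J. gauss_curvature (\<lambda>s t. \<alpha> s + \<beta> t) s t = c)))"
proof -
  obtain a A where da: "\<And>x. x \<in> I \<Longrightarrow> (\<alpha> has_vector_derivative a x) (at x)"
    and dA: "\<And>x. x \<in> I \<Longrightarrow> (a has_vector_derivative A x) (at x)"
    and ca: "continuous_on I a" and cA: "continuous_on I A"
    using smooth_curve_on_derivatives[OF sa I(1)] by blast
  obtain b B where db: "\<And>x. x \<in> J \<Longrightarrow> (\<beta> has_vector_derivative b x) (at x)"
    and dB: "\<And>x. x \<in> J \<Longrightarrow> (b has_vector_derivative B x) (at x)"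
    and cb: "continuous_on J b" and cB: "continuous_on J B"
    using smooth_curve_on_derivatives[OF sb J(1)] by blast
  have reg': "\<And>s t. s \<in> I \<Longrightarrow> t \<in> J \<Longrightarrow> cross3 (a s) (b t) \<noteq> 0"
    using cross3_ne_0_if_regular_param[OF reg _ _ da db] .
  have K: "gauss_curvature (\<lambda>s t. \<alpha> s + \<beta> t) s t = translation_curvature (a s) (A s) (b t) (B t)"
    if "s \<in> I" "t \<in> J" for s t
    by (rule gauss_curvature_translation_surface[OF I(1) that(1) J(1) that(2) da dA db dB])
  show ?thesis
    using flat_translation_surface_cylindrical[OF I J da dA db dB ca cA cb cB reg']
      no_constant_curvature_if_planar_generator[OF I(1,3) J(1,3) da dA db dB ca cb reg']
    by (simp add: K) blast
qed

end
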